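(* In the trilevel setting, let $\Omega:=\{x\in\mathrm{Fix}(W):\langle (I-T)x,y-x\rangle\ge0\ \forall y\in\mathrm{Fix}(W)\}$ be nonempty. Assume $\lim_{k\to\infty}\beta_k/\alpha_k=+\infty$, $\alpha_k\to0$, $\sum_k\alpha_k=\infty$, there is $K>0$ with $\limsup_{k}\frac1{\alpha_k}\left|\frac1{\beta_k}-\frac1{\beta_{k-1}}\right|\le K$, $\limsup_{k}\frac{|\beta_k-\beta_{k-1}|+|\alpha_k-\alpha_{k-1}|}{\alpha_k\beta_k}=0$, and that the trilevel iteration sequence $\{x^k\}$ is bounded. Suppose further: $(A_1)$ $W$ is boundedly linearly regular, i.e. for every $\rho>0$ there is $\theta>0$ with $d(x,\mathrm{Fix}(W))\le\theta\|x-W(x)\|$ for all $x$ with $\|x\|\le\rho$; $(A_2)$ $\limsup_{k\to\infty}\beta_k^2/\alpha_k=0$. Then $\{x^k\}$ converges to the unique $x^*\in\Omega$ satisfying $\langle x^*-S(x^* ),x-x^*\rangle\ge0$ for all $x\in\Omega$; equivalently $\omega(x^* )=\min_{x\in\Omega}\omega(x)$.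
   Context: Trilevel setting. Let $f_1,f_2:\mathbb R^n\to\mathbb R$ be convex and continuously differentiable with $L_{f_i}$-Lipschitz gradients, and $g_1,g_2:\mathbb R^n\to(-\infty,+\infty]$ proper, lower semicontinuous and convex; put $\phi_i=f_i+g_i$. Let $\omega:\mathbb R^n\to\mathbb R$ be $\mu$-strongly convex and continuously differentiable with $L_\omega$-Lipschitz gradient. Let $Y^*=\arg\min_{x\in\mathbb R^n}\phi_2(x)$ and $X^*=\arg\min_{x\in Y^*}\phi_1(x)$, both assumed nonempty. For a proper lsc convex $g$, $\mathrm{prox}_g(x)=\arg\min_{u}\{g(u)+\tfrac12\|u-x\|^2\}$. Fix $u\in(0,\tfrac{2}{L_\omega+\mu}]$, $t\in(0,1/L_{f_1}]$, $s\in(0,1/L_{f_2}]$ and define $S(x)=x-u\nabla\omega(x)$, $T(x)=\mathrm{prox}_{tg_1}(x-t\nabla f_1(x))$, $W(x)=\mathrm{prox}_{sg_2}(x-s\nabla f_2(x))$. Then $S$ is a contraction with constant $r=\sqrt{1-\tfrac{2u\mu L_\omega}{\mu+L_\omega}}\in[0,1)$, $T,W$ are nonexpansive, $\mathrm{Fix}(W)=Y^*$. Given $x^0\in\mathbb R^n$ and real sequences $\alpha_k,\beta_k\in(0,1)$, the trilevel iteration sequence is $x^{k+1}=\alpha_kS(x^k)+(1-\alpha_k)\beta_kT(x^k)+(1-\alpha_k)(1-\beta_k)W(x^k)$, $k\ge0$. $I$ is the identity, $d(x,A)=\inf_{a\in A}\|x-a\|$. *)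

theory Defs
  imports "HOL-Analysis.Analysis"
begin

text \<open>Extended-real-valued functions on a real inner product space model
  functions into (-infinity, +infinity].\<close>

definition proper_fun :: "('a \<Rightarrow> ereal) \<Rightarrow> bool" where
  "proper_fun g \<longleftrightarrow> (\<forall>x. g x \<noteq> -\<infinity>) \<and> (\<exists>x. g x < \<infinity>)"

definition lsc_fun :: "('a::topological_space \<Rightarrow> ereal) \<Rightarrow> bool" where
  "lsc_fun g \<longleftrightarrow> (\<forall>x X. X \<longlonglongrightarrow> x \<longrightarrow> g x \<le> liminf (\<lambda>k. g (X k)))"

definition convex_efun :: "('a::real_vector \<Rightarrow> ereal) \<Rightarrow> bool" where
  "convex_efun g \<longleftrightarrow> (\<forall>x y (l::real). 0 < l \<and> l < 1 \<longrightarrow>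
      g ((1 - l) *\<^sub>R x + l *\<^sub>R y) \<le> ereal (1 - l) * g x + ereal l * g y)"

definition strongly_convex :: "real \<Rightarrow> ('a::real_inner \<Rightarrow> real) \<Rightarrow> bool" where
  "strongly_convex \<mu> \<omega> \<longleftrightarrow> convex_on UNIV (\<lambda>x. \<omega> x - \<mu> / 2 * (norm x)\<^sup>2)"

definition prox :: "('a::real_normed_vector \<Rightarrow> ereal) \<Rightarrow> 'a \<Rightarrow> 'a" where
  "prox g x = (SOME p. \<forall>v. g p + ereal ((norm (p - x))\<^sup>2 / 2) \<le> g v + ereal ((norm (v - x))\<^sup>2 / 2))"

definition fixpts :: "('a \<Rightarrow> 'a) \<Rightarrow> 'a set" where
  "fixpts F = {x. F x = x}"

end

theory Submission
  imports Defs
begin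

text \<open>S is a contraction (a gradient step of a strongly convex function with Lipschitz
  gradient), while T and W are nonexpansive (forward-backward steps: the gradient step is
  nonexpansive by the Baillon--Haddad theorem, the proximal map is firmly nonexpansive).
  The set \<Omega> of solutions of the variational inequality for I - T over Fix W is closed and
  convex (Minty), so \<omega> has a unique minimiser p on \<Omega>, which is also the unique solution of
  the variational inequality for I - S over \<Omega>.

  For the iterates, a recursion for the step lengths shows norm (x (k+1) - x k) = o(\<beta> k);
  hence norm (x k - W (x k)) = O(\<beta> k) and, by bounded linear regularity,
  d(x k, Fix W) = O(\<beta> k). Consequently every cluster point of the bounded sequence lies in
  \<Omega>, and the inequality
  norm (x (k+1) - p)^2 \<le> (1 - \<alpha> k (1 - r)) norm (x k - p)^2 + \<alpha> k \<delta> k holds with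
  limsup \<delta> k \<le> 0 because \<beta> k^2 / \<alpha> k \<rightarrow> 0. Xu's lemma then gives x k \<rightarrow> p.\<close>

lemma real_le_of_forall_small_mult:
  fixes A B C :: real
  assumes "\<And>l. 0 < l \<Longrightarrow> l < 1 \<Longrightarrow> A \<le> B + l * C"
  shows "A \<le> B"
proof -
  have "((\<lambda>l. B + l * C) \<longlongrightarrow> B + 0 * C) (at_right 0)"
    by (intro tendsto_intros)
  moreover have "eventually (\<lambda>l. l \<in> {0<..<1}) (at_right (0::real))"
    by (rule eventually_at_right_real) simp
  hence "eventually (\<lambda>l. A \<le> B + l * C) (at_right (0::real))"
    by eventually_elim (use assms in auto)
  ultimately show ?thesis
    by (simp add: tendsto_lowerbound)
qed

lemma norm_convex_comb_diff_sq:
  fixes a b x :: "'a::real_inner"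
  shows "(norm ((1 - l) *\<^sub>R a + l *\<^sub>R b - x))\<^sup>2
    = (1 - l) * (norm (a - x))\<^sup>2 + l * (norm (b - x))\<^sup>2 - l * (1 - l) * (norm (a - b))\<^sup>2"
proof -
  define u v where "u = a - x" and "v = b - x"
  have "(norm ((1 - l) *\<^sub>R a + l *\<^sub>R b - x))\<^sup>2 = (norm ((1 - l) *\<^sub>R u + l *\<^sub>R v))\<^sup>2"
    by (simp add: u_def v_def algebra_simps)
  also have "\<dots> = (1 - l) * (1 - l) * inner u u + 2 * (1 - l) * l * inner u v + l * l * inner v v"
    by (simp add: power2_norm_eq_inner inner_add_left inner_add_right inner_commute algebra_simps)
  also have "\<dots> = (1 - l) * inner u u + l * inner v v - l * (1 - l) * (inner u u - 2 * inner u v + inner v v)"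
    by algebra
  also have "\<dots> = (1 - l) * (norm u)\<^sup>2 + l * (norm v)\<^sup>2 - l * (1 - l) * (norm (u - v))\<^sup>2"
    by (simp add: power2_norm_eq_inner inner_diff_left inner_diff_right inner_commute)
  also have "u - v = a - b"
    by (simp add: u_def v_def)
  finally show ?thesis
    by (simp add: u_def v_def)
qed

lemma norm_diff_power2:
  fixes a b :: "'a::real_inner"
  shows "(norm (a - b))\<^sup>2 = (norm a)\<^sup>2 - 2 * inner a b + (norm b)\<^sup>2"
  by (simp add: power2_norm_eq_inner inner_diff_left inner_diff_right inner_commute)

lemma power2_norm_add_le:
  fixes a b :: "'a::real_inner"
  shows "(norm (a + b))\<^sup>2 \<le> (norm a)\<^sup>2 + 2 * inner (a + b) b"
proof -
  have "(norm (a + b))\<^sup>2 = (norm a)\<^sup>2 + 2 * inner (a + b) b - (norm b)\<^sup>2"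
    by (simp add: power2_norm_eq_inner inner_add_left inner_add_right inner_commute)
  thus ?thesis by simp
qed

lemma norm_convex_comb_diff_le:
  fixes u u' v v' :: "'a::real_normed_vector"
  assumes "0 \<le> a'" "a' \<le> 1"
  shows "norm ((a' *\<^sub>R u' + (1 - a') *\<^sub>R v') - (a *\<^sub>R u + (1 - a) *\<^sub>R v))
    \<le> a' * norm (u' - u) + (1 - a') * norm (v' - v) + \<bar>a' - a\<bar> * (norm u + norm v)"
proof -
  have "(a' *\<^sub>R u' + (1 - a') *\<^sub>R v') - (a *\<^sub>R u + (1 - a) *\<^sub>R v)
      = a' *\<^sub>R (u' - u) + (1 - a') *\<^sub>R (v' - v) + (a' - a) *\<^sub>R (u - v)"
    by (simp add: algebra_simps)
  also have "norm \<dots> \<le> norm (a' *\<^sub>R (u' - u)) + norm ((1 - a') *\<^sub>R (v' - v)) + norm ((a' - a) *\<^sub>R (u - v))"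
    using norm_triangle_ineq[of "a' *\<^sub>R (u' - u) + (1 - a') *\<^sub>R (v' - v)" "(a' - a) *\<^sub>R (u - v)"]
      norm_triangle_ineq[of "a' *\<^sub>R (u' - u)" "(1 - a') *\<^sub>R (v' - v)"] by linarith
  also have "\<dots> \<le> a' * norm (u' - u) + (1 - a') * norm (v' - v) + \<bar>a' - a\<bar> * (norm u + norm v)"
    using assms norm_triangle_ineq4[of u v] by (simp add: mult_left_mono)
  finally show ?thesis .
qed

section \<open>Smooth convex functions\<close>

lemma gderiv_continuous_on:
  assumes "\<And>z. GDERIV f z :> g z"
  shows "continuous_on UNIV f"
  using assms unfolding gderiv_def
  by (intro has_derivative_continuous_on) (blast intro: has_derivative_at_withinI)

lemma gderiv_has_real_derivative_line:
  fixes f :: "'a::real_inner \<Rightarrow> real"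
  assumes "\<And>z. GDERIV f z :> g z"
  shows "((\<lambda>l. f (x + l *\<^sub>R d)) has_real_derivative inner d (g (x + l *\<^sub>R d))) (at l)"
proof -
  have "((\<lambda>l. x + l *\<^sub>R d) has_derivative (\<lambda>h. h *\<^sub>R d)) (at l)"
    by (auto intro!: derivative_eq_intros)
  moreover have "(f has_derivative (\<lambda>h. inner h (g (x + l *\<^sub>R d)))) (at (x + l *\<^sub>R d))"
    using assms unfolding gderiv_def by blast
  ultimately have "((\<lambda>l. f (x + l *\<^sub>R d)) has_derivative (\<lambda>h. inner (h *\<^sub>R d) (g (x + l *\<^sub>R d)))) (at l)"
    by (rule has_derivative_compose)
  moreover have "(\<lambda>h. inner (h *\<^sub>R d) (g (x + l *\<^sub>R d))) = (*) (inner d (g (x + l *\<^sub>R d)))"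
    by auto
  ultimately show ?thesis
    unfolding has_field_derivative_def by simp
qed

lemma gderiv_directional_le:
  fixes f :: "'a::real_inner \<Rightarrow> real"
  assumes gd: "\<And>z. GDERIV f z :> g z"
    and le: "\<And>l. 0 < l \<Longrightarrow> l < 1 \<Longrightarrow> f (x + l *\<^sub>R d) \<le> f x + l * c"
  shows "inner d (g x) \<le> c"
proof -
  define \<phi> where "\<phi> = (\<lambda>l. f (x + l *\<^sub>R d))"
  have "(\<phi> has_real_derivative inner d (g x)) (at 0)"
    using gderiv_has_real_derivative_line[OF gd, of x d 0] by (simp add: \<phi>_def)
  hence "((\<lambda>l. (\<phi> l - \<phi> 0) / (l - 0)) \<longlongrightarrow> inner d (g x)) (at 0)"
    by (simp add: has_field_derivative_iff)
  hence "((\<lambda>l. (\<phi> l - \<phi> 0) / (l - 0)) \<longlongrightarrow> inner d (g x)) (at_right 0)"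
    by (rule tendsto_mono[rotated]) (simp add: at_le)
  moreover have "eventually (\<lambda>l. l \<in> {0<..<1}) (at_right (0::real))"
    by (rule eventually_at_right_real) simp
  hence "eventually (\<lambda>l. (\<phi> l - \<phi> 0) / (l - 0) \<le> c) (at_right (0::real))"
  proof eventually_elim
    case (elim l)
    hence "\<phi> l - \<phi> 0 \<le> l * c" using le[of l] by (simp add: \<phi>_def)
    thus ?case using elim by (simp add: divide_le_eq mult.commute)
  qed
  ultimately show ?thesis
    by (simp add: tendsto_upperbound)
qed

lemma convex_on_gderiv_le:
  fixes f :: "'a::real_inner \<Rightarrow> real"
  assumes cv: "convex_on UNIV f" and gd: "\<And>z. GDERIV f z :> g z"
  shows "f x + inner (g x) (y - x) \<le> f y"
proof -
  have "inner (y - x) (g x) \<le> f y - f x"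
  proof (rule gderiv_directional_le[OF gd])
    fix l :: real assume l: "0 < l" "l < 1"
    have "f ((1 - l) *\<^sub>R x + l *\<^sub>R y) \<le> (1 - l) * f x + l * f y"
      using l by (intro convex_onD[OF cv]) auto
    moreover have "(1 - l) *\<^sub>R x + l *\<^sub>R y = x + l *\<^sub>R (y - x)"
      by (simp add: algebra_simps)
    ultimately show "f (x + l *\<^sub>R (y - x)) \<le> f x + l * (f y - f x)"
      by (simp add: algebra_simps)
  qed
  thus ?thesis by (simp add: inner_commute)
qed

lemma convex_on_gderiv_monotone:
  fixes f :: "'a::real_inner \<Rightarrow> real"
  assumes cv: "convex_on UNIV f" and gd: "\<And>z. GDERIV f z :> g z"
  shows "0 \<le> inner (g x - g y) (x - y)"
  using convex_on_gderiv_le[OF cv gd, of x y] convex_on_gderiv_le[OF cv gd, of y x]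
  by (simp add: inner_diff_left inner_diff_right inner_commute)

lemma lipschitz_gderiv_descent:
  fixes f :: "'a::real_inner \<Rightarrow> real"
  assumes gd: "\<And>z. GDERIV f z :> g z" and lip: "L-lipschitz_on UNIV g"
  shows "f y \<le> f x + inner (g x) (y - x) + L / 2 * (norm (y - x))\<^sup>2"
proof -
  define d where "d = y - x"
  define h where "h = (\<lambda>l. f (x + l *\<^sub>R d) - l * inner (g x) d - L * l\<^sup>2 / 2 * (norm d)\<^sup>2)"
  have "h 1 \<le> h 0"
  proof (rule DERIV_nonpos_imp_nonincreasing[of 0 1 h])
    fix l :: real assume l: "0 \<le> l" "l \<le> 1"
    have "(h has_real_derivative
        inner d (g (x + l *\<^sub>R d)) - inner (g x) d - L * (2 * l) / 2 * (norm d)\<^sup>2) (at l)"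
      unfolding h_def
      by (intro DERIV_diff gderiv_has_real_derivative_line[OF gd]) (auto intro!: derivative_eq_intros)
    moreover have "inner d (g (x + l *\<^sub>R d)) - inner (g x) d \<le> L * l * (norm d)\<^sup>2"
    proof -
      have "inner d (g (x + l *\<^sub>R d)) - inner (g x) d = inner d (g (x + l *\<^sub>R d) - g x)"
        by (simp add: inner_diff_right inner_commute)
      also have "\<dots> \<le> norm d * norm (g (x + l *\<^sub>R d) - g x)"
        by (rule norm_cauchy_schwarz)
      also have "\<dots> \<le> norm d * (L * (l * norm d))"
        using lipschitz_on_normD[OF lip, of "x + l *\<^sub>R d" x] l
        by (intro mult_left_mono) auto
      finally show ?thesis by (simp add: power2_eq_square algebra_simps)
    qed
    ultimately show "\<exists>y. DERIV h l :> y \<and> y \<le> 0" by force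
  qed simp
  thus ?thesis by (simp add: h_def d_def algebra_simps)
qed

text \<open>The minimising step x = b - (1/M) (g b - g a) of the descent inequality at b,
  compared with the gradient inequality at a.\<close>
lemma convex_descent_gap:
  fixes f :: "'a::real_inner \<Rightarrow> real"
  assumes cv: "convex_on UNIV f" and gd: "\<And>z. GDERIV f z :> g z" and M: "M > 0"
    and desc: "\<And>x y. f y \<le> f x + inner (g x) (y - x) + M / 2 * (norm (y - x))\<^sup>2"
  shows "f a + inner (g a) (b - a) + (norm (g b - g a))\<^sup>2 / (2 * M) \<le> f b"
proof -
  define \<Delta> where "\<Delta> = g b - g a"
  define z where "z = b - (1 / M) *\<^sub>R \<Delta>"
  have "f a + inner (g a) (z - a) \<le> f z" by (rule convex_on_gderiv_le[OF cv gd])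
  also have "f z \<le> f b + inner (g b) (z - b) + M / 2 * (norm (z - b))\<^sup>2" by (rule desc)
  finally have le: "f a + inner (g a) (z - a) \<le> f b + inner (g b) (z - b) + M / 2 * (norm (z - b))\<^sup>2" .
  have "inner (g a) (z - a) = inner (g a) (b - a) - inner (g a) \<Delta> / M"
    and "inner (g b) (z - b) = - (inner (g b) \<Delta> / M)"
    by (simp_all add: z_def inner_diff_right)
  moreover have "M / 2 * (norm (z - b))\<^sup>2 = (norm \<Delta>)\<^sup>2 / (2 * M)"
    using M by (simp add: z_def power_divide power2_eq_square)
  moreover have "inner (g b) \<Delta> / M - inner (g a) \<Delta> / M = (norm \<Delta>)\<^sup>2 / M"
    by (simp add: \<Delta>_def power2_norm_eq_inner inner_diff_left diff_divide_distrib)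
  moreover have "(norm \<Delta>)\<^sup>2 / M = 2 * ((norm \<Delta>)\<^sup>2 / (2 * M))" by simp
  ultimately show ?thesis
    using le unfolding \<Delta>_def by linarith
qed

text \<open>Baillon--Haddad theorem. The descent gap needs a positive constant, hence the
  detour through M + e.\<close>
lemma convex_gderiv_cocoercive:
  fixes f :: "'a::real_inner \<Rightarrow> real"
  assumes cv: "convex_on UNIV f" and gd: "\<And>z. GDERIV f z :> g z" and M: "M \<ge> 0"
    and desc: "\<And>x y. f y \<le> f x + inner (g x) (y - x) + M / 2 * (norm (y - x))\<^sup>2"
  shows "(norm (g x - g y))\<^sup>2 \<le> M * inner (g x - g y) (x - y)"
proof (rule real_le_of_forall_small_mult)
  fix e :: real assume e: "0 < e" "e < 1"
  have desc': "f b \<le> f a + inner (g a) (b - a) + (M + e) / 2 * (norm (b - a))\<^sup>2" for a b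
  proof -
    have "M / 2 * (norm (b - a))\<^sup>2 \<le> (M + e) / 2 * (norm (b - a))\<^sup>2"
      using e by (intro mult_right_mono) auto
    thus ?thesis using desc[where x = a and y = b] by linarith
  qed
  have Me: "M + e > 0" using M e by simp
  have "f x + inner (g x) (y - x) + (norm (g y - g x))\<^sup>2 / (2 * (M + e)) \<le> f y"
    and "f y + inner (g y) (x - y) + (norm (g x - g y))\<^sup>2 / (2 * (M + e)) \<le> f x"
    by (rule convex_descent_gap[OF cv gd Me desc'])+
  moreover have "inner (g x) (y - x) + inner (g y) (x - y) = - inner (g x - g y) (x - y)"
    by (simp add: inner_diff_left inner_diff_right inner_commute)
  moreover have "(norm (g x - g y))\<^sup>2 / (M + e) = 2 * ((norm (g x - g y))\<^sup>2 / (2 * (M + e)))"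
    using Me by (simp add: field_simps)
  ultimately have "(norm (g x - g y))\<^sup>2 / (M + e) \<le> inner (g x - g y) (x - y)"
    by (simp add: norm_minus_commute)
  hence "(norm (g x - g y))\<^sup>2 \<le> (M + e) * inner (g x - g y) (x - y)"
    using Me by (simp add: divide_le_eq mult.commute)
  thus "(norm (g x - g y))\<^sup>2 \<le> M * inner (g x - g y) (x - y) + e * inner (g x - g y) (x - y)"
    by (simp add: distrib_right)
qed

lemma gradient_step_nonexpansive:
  fixes f :: "'a::real_inner \<Rightarrow> real"
  assumes cv: "convex_on UNIV f" and gd: "\<And>z. GDERIV f z :> g z"
    and L: "L > 0" and lip: "L-lipschitz_on UNIV g" and t: "0 < t" "t \<le> 1 / L"
  shows "1-lipschitz_on UNIV (\<lambda>x. x - t *\<^sub>R g x)"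
proof (rule lipschitz_onI)
  fix x y :: 'a
  define D d where "D = g x - g y" and "d = x - y"
  have cocoercive: "(norm D)\<^sup>2 \<le> L * inner D d"
    unfolding D_def d_def
    by (rule convex_gderiv_cocoercive[OF cv gd]) (use L lipschitz_gderiv_descent[OF gd lip] in auto)
  have mono: "0 \<le> inner D d"
    unfolding D_def d_def by (rule convex_on_gderiv_monotone[OF cv gd])
  have "t * L \<le> 1" using t L by (simp add: field_simps)
  have "t\<^sup>2 * (norm D)\<^sup>2 \<le> t\<^sup>2 * (L * inner D d)"
    using cocoercive by (intro mult_left_mono) auto
  also have "\<dots> = t * (t * L) * inner D d" by (simp add: power2_eq_square)
  also have "\<dots> \<le> t * 1 * inner D d"
    using \<open>t * L \<le> 1\<close> mono t by (intro mult_right_mono mult_left_mono) auto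
  finally have "t\<^sup>2 * (norm D)\<^sup>2 \<le> t * inner D d" by simp
  moreover have "(norm (d - t *\<^sub>R D))\<^sup>2 = (norm d)\<^sup>2 - 2 * t * inner D d + t\<^sup>2 * (norm D)\<^sup>2"
    using t by (simp add: norm_diff_power2 inner_commute power_mult_distrib)
  moreover have "0 \<le> t * inner D d" and "2 * t * inner D d = 2 * (t * inner D d)"
    using t mono by simp_all
  ultimately have "(norm (d - t *\<^sub>R D))\<^sup>2 \<le> (norm d)\<^sup>2"
    by linarith
  hence "norm (d - t *\<^sub>R D) \<le> norm d"
    by (simp add: power2_le_iff_abs_le)
  moreover have "(x - t *\<^sub>R g x) - (y - t *\<^sub>R g y) = d - t *\<^sub>R D"
    by (simp add: D_def d_def algebra_simps)
  ultimately show "dist (x - t *\<^sub>R g x) (y - t *\<^sub>R g y) \<le> 1 * dist x y"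
    by (simp only: dist_norm) (simp add: d_def)
qed simp

lemma gderiv_diff_half_sq_norm:
  fixes \<omega> :: "'a::real_inner \<Rightarrow> real"
  assumes "GDERIV \<omega> z :> g"
  shows "GDERIV (\<lambda>x. \<omega> x - c / 2 * (norm x)\<^sup>2) z :> g - c *\<^sub>R z"
proof -
  have "GDERIV (\<lambda>x. c / 2 * (norm x)\<^sup>2) z :> c *\<^sub>R z"
    unfolding gderiv_def power2_norm_eq_inner
    by (auto intro!: derivative_eq_intros simp: inner_commute algebra_simps)
  thus ?thesis by (rule GDERIV_diff[OF assms])
qed

lemma half_sq_norm_shift_identity:
  fixes a b v :: "'a::real_inner"
  shows "(fb - \<mu> / 2 * (norm b)\<^sup>2) - (fa - \<mu> / 2 * (norm a)\<^sup>2) - inner (v - \<mu> *\<^sub>R a) (b - a)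
    = fb - fa - inner v (b - a) - \<mu> / 2 * (norm (b - a))\<^sup>2"
  by (simp add: power2_norm_eq_inner inner_diff_left inner_diff_right inner_commute algebra_simps)

lemma strongly_convex_gderiv_le:
  fixes \<omega> :: "'a::real_inner \<Rightarrow> real"
  assumes sc: "strongly_convex \<mu> \<omega>" and gd: "\<And>z. GDERIV \<omega> z :> g z"
  shows "\<omega> x + inner (g x) (y - x) + \<mu> / 2 * (norm (y - x))\<^sup>2 \<le> \<omega> y"
proof -
  have "\<omega> x - \<mu> / 2 * (norm x)\<^sup>2 + inner (g x - \<mu> *\<^sub>R x) (y - x) \<le> \<omega> y - \<mu> / 2 * (norm y)\<^sup>2"
    using convex_on_gderiv_le[OF sc[unfolded strongly_convex_def] gderiv_diff_half_sq_norm[OF gd]] .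
  thus ?thesis
    using half_sq_norm_shift_identity[of "\<omega> y" \<mu> y "\<omega> x" x "g x"] by linarith
qed

lemma strongly_convex_modulus_le_lipschitz:
  fixes \<omega> :: "'a::euclidean_space \<Rightarrow> real"
  assumes sc: "strongly_convex \<mu> \<omega>" and gd: "\<And>z. GDERIV \<omega> z :> g z"
    and lip: "L-lipschitz_on UNIV g"
  shows "\<mu> \<le> L"
proof -
  obtain e :: 'a where "e \<noteq> 0" using nonzero_Basis nonempty_Basis by blast
  have "\<omega> 0 + inner (g 0) e + \<mu> / 2 * (norm e)\<^sup>2 \<le> \<omega> e"
    using strongly_convex_gderiv_le[OF sc gd, of 0 e] by simp
  moreover have "\<omega> e \<le> \<omega> 0 + inner (g 0) e + L / 2 * (norm e)\<^sup>2"
    using lipschitz_gderiv_descent[OF gd lip, of e 0] by simp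
  ultimately have "\<mu> * (norm e)\<^sup>2 \<le> L * (norm e)\<^sup>2" by simp
  thus ?thesis using \<open>e \<noteq> 0\<close> by simp
qed

lemma strongly_convex_cocoercive:
  fixes \<omega> :: "'a::real_inner \<Rightarrow> real"
  assumes sc: "strongly_convex \<mu> \<omega>" and gd: "\<And>z. GDERIV \<omega> z :> g z"
    and lip: "L-lipschitz_on UNIV g" and \<mu>L: "\<mu> \<le> L"
  shows "(norm (g x - g y))\<^sup>2 + \<mu> * L * (norm (x - y))\<^sup>2 \<le> (L + \<mu>) * inner (g x - g y) (x - y)"
proof -
  define h where "h = (\<lambda>x. \<omega> x - \<mu> / 2 * (norm x)\<^sup>2)"
  define gh where "gh = (\<lambda>x. g x - \<mu> *\<^sub>R x)"
  have hgd: "GDERIV h z :> gh z" for z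
    unfolding h_def gh_def by (rule gderiv_diff_half_sq_norm[OF gd])
  have hdesc: "h b \<le> h a + inner (gh a) (b - a) + (L - \<mu>) / 2 * (norm (b - a))\<^sup>2" for a b
  proof -
    have "(L - \<mu>) / 2 * (norm (b - a))\<^sup>2 = L / 2 * (norm (b - a))\<^sup>2 - \<mu> / 2 * (norm (b - a))\<^sup>2"
      by (simp add: left_diff_distrib diff_divide_distrib)
    thus ?thesis
      using lipschitz_gderiv_descent[OF gd lip, of b a]
        half_sq_norm_shift_identity[of "\<omega> b" \<mu> b "\<omega> a" a "g a"]
      unfolding h_def gh_def by linarith
  qed
  define D d where "D = g x - g y" and "d = x - y"
  have "(norm (gh x - gh y))\<^sup>2 \<le> (L - \<mu>) * inner (gh x - gh y) (x - y)"
    by (rule convex_gderiv_cocoercive[OF sc[unfolded strongly_convex_def, folded h_def] hgd _ hdesc])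
      (use \<mu>L in simp)
  moreover have "gh x - gh y = D - \<mu> *\<^sub>R d"
    by (simp add: gh_def D_def d_def algebra_simps)
  moreover have "(norm (D - \<mu> *\<^sub>R d))\<^sup>2 = (norm D)\<^sup>2 - 2 * \<mu> * inner D d + \<mu>\<^sup>2 * (norm d)\<^sup>2"
    by (simp add: norm_diff_power2 power_mult_distrib)
  moreover have "inner (D - \<mu> *\<^sub>R d) d = inner D d - \<mu> * (norm d)\<^sup>2"
    by (simp add: inner_diff_left power2_norm_eq_inner)
  ultimately have "(norm D)\<^sup>2 - 2 * \<mu> * inner D d + \<mu>\<^sup>2 * (norm d)\<^sup>2
      \<le> (L - \<mu>) * (inner D d - \<mu> * (norm d)\<^sup>2)"
    by (simp add: d_def)
  thus ?thesis
    by (simp add: D_def[symmetric] d_def[symmetric] algebra_simps power2_eq_square)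
qed

lemma gradient_step_contraction:
  fixes \<omega> :: "'a::real_inner \<Rightarrow> real"
  assumes sc: "strongly_convex \<mu> \<omega>" and gd: "\<And>z. GDERIV \<omega> z :> g z"
    and lip: "L-lipschitz_on UNIV g" and \<mu>: "\<mu> > 0" and \<mu>L: "\<mu> \<le> L"
    and u: "0 < u" "u \<le> 2 / (L + \<mu>)"
  shows "(sqrt (1 - 2 * u * \<mu> * L / (L + \<mu>)))-lipschitz_on UNIV (\<lambda>x. x - u *\<^sub>R g x)"
    and "sqrt (1 - 2 * u * \<mu> * L / (L + \<mu>)) < 1"
proof -
  define c where "c = 2 * u * \<mu> * L / (L + \<mu>)"
  have c0: "0 < c" using u \<mu> \<mu>L by (simp add: c_def)
  have "c \<le> 2 * (2 / (L + \<mu>)) * \<mu> * L / (L + \<mu>)"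
    unfolding c_def using u \<mu> \<mu>L by (intro divide_right_mono mult_right_mono) auto
  also have "\<dots> = 4 * \<mu> * L / (L + \<mu>)\<^sup>2"
    by (simp add: power2_eq_square)
  also have "\<dots> \<le> 1"
  proof -
    have "(L + \<mu>)\<^sup>2 - 4 * \<mu> * L = (L - \<mu>)\<^sup>2" by (simp add: power2_eq_square algebra_simps)
    hence "4 * \<mu> * L \<le> (L + \<mu>)\<^sup>2" using zero_le_power2[of "L - \<mu>"] by linarith
    thus ?thesis using \<mu> \<mu>L by (simp add: divide_le_eq)
  qed
  finally have c1: "c \<le> 1" .
  show "sqrt (1 - c) < 1" using c0 c1 by simp
  show "(sqrt (1 - c))-lipschitz_on UNIV (\<lambda>x. x - u *\<^sub>R g x)"
  proof (rule lipschitz_onI)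
    fix x y :: 'a
    define D d where "D = g x - g y" and "d = x - y"
    have key: "(norm D)\<^sup>2 + \<mu> * L * (norm d)\<^sup>2 \<le> (L + \<mu>) * inner D d"
      unfolding D_def d_def by (rule strongly_convex_cocoercive[OF sc gd lip \<mu>L])
    have "(norm (d - u *\<^sub>R D))\<^sup>2 = (norm d)\<^sup>2 - 2 * u * inner D d + u\<^sup>2 * (norm D)\<^sup>2"
      using u by (simp add: norm_diff_power2 inner_commute power_mult_distrib)
    also have "\<dots> \<le> (1 - c) * (norm d)\<^sup>2"
    proof -
      have "((norm D)\<^sup>2 + \<mu> * L * (norm d)\<^sup>2) / (L + \<mu>) \<le> inner D d"
        using key \<mu> \<mu>L by (simp add: divide_le_eq mult.commute)
      hence "2 * u * (((norm D)\<^sup>2 + \<mu> * L * (norm d)\<^sup>2) / (L + \<mu>)) \<le> 2 * u * inner D d"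
        using u by (intro mult_left_mono) auto
      moreover have "2 * u * (((norm D)\<^sup>2 + \<mu> * L * (norm d)\<^sup>2) / (L + \<mu>))
          = 2 * u * (norm D)\<^sup>2 / (L + \<mu>) + c * (norm d)\<^sup>2"
        by (simp add: c_def add_divide_distrib distrib_left)
      moreover have "u * (L + \<mu>) \<le> 2" using u \<mu> \<mu>L by (simp add: field_simps)
      hence "u * (u * (norm D)\<^sup>2) \<le> 2 / (L + \<mu>) * (u * (norm D)\<^sup>2)"
        using u \<mu> \<mu>L by (intro mult_right_mono) (auto simp: field_simps)
      hence "u\<^sup>2 * (norm D)\<^sup>2 \<le> 2 * u * (norm D)\<^sup>2 / (L + \<mu>)"
        by (simp add: power2_eq_square)
      ultimately show ?thesis
        by (simp add: algebra_simps)
    qed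
    finally have "norm (d - u *\<^sub>R D) \<le> sqrt ((1 - c) * (norm d)\<^sup>2)"
      by (simp add: real_le_rsqrt)
    hence "norm (d - u *\<^sub>R D) \<le> sqrt (1 - c) * norm d"
      by (simp add: real_sqrt_mult)
    moreover have "(x - u *\<^sub>R g x) - (y - u *\<^sub>R g y) = d - u *\<^sub>R D"
      by (simp add: D_def d_def algebra_simps)
    ultimately show "dist (x - u *\<^sub>R g x) (y - u *\<^sub>R g y) \<le> sqrt (1 - c) * dist x y"
      by (simp only: dist_norm) (simp add: d_def)
  qed (use c1 in simp)
qed

section \<open>Proximal maps\<close>

lemma proper_fun_scale:
  assumes "t > 0" and "proper_fun g"
  shows "proper_fun (\<lambda>z. ereal t * g z)"
proof -
  obtain v where "g v < \<infinity>" using assms(2) unfolding proper_fun_def by blast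
  hence "ereal t * g v < \<infinity>" using assms(1) by (cases "g v") auto
  moreover have "ereal t * g z \<noteq> -\<infinity>" for z
    using assms unfolding proper_fun_def by (cases "g z") auto
  ultimately show ?thesis unfolding proper_fun_def by blast
qed

lemma lsc_fun_scale:
  assumes "t > 0" and "lsc_fun g"
  shows "lsc_fun (\<lambda>z. ereal t * g z)"
  unfolding lsc_fun_def
proof (intro allI impI)
  fix x and X :: "nat \<Rightarrow> 'a" assume "X \<longlonglongrightarrow> x"
  hence "ereal t * g x \<le> ereal t * liminf (\<lambda>k. g (X k))"
    using assms by (intro ereal_mult_left_mono) (auto simp: lsc_fun_def)
  also have "\<dots> = liminf (\<lambda>k. ereal t * g (X k))"
    using assms(1) by (simp add: Liminf_ereal_mult_left)
  finally show "ereal t * g x \<le> liminf (\<lambda>k. ereal t * g (X k))" .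
qed

lemma convex_efun_scale:
  assumes "t > 0" and "convex_efun g"
  shows "convex_efun (\<lambda>z. ereal t * g z)"
  unfolding convex_efun_def
proof (intro allI impI)
  fix x y :: 'a and l :: real assume l: "0 < l \<and> l < 1"
  have "ereal t * g ((1 - l) *\<^sub>R x + l *\<^sub>R y) \<le> ereal t * (ereal (1 - l) * g x + ereal l * g y)"
    using assms l by (intro ereal_mult_left_mono) (auto simp: convex_efun_def)
  also have "\<dots> = ereal (1 - l) * (ereal t * g x) + ereal l * (ereal t * g y)"
    using assms(1) by (simp add: ereal_pos_distrib mult.left_commute)
  finally show "ereal t * g ((1 - l) *\<^sub>R x + l *\<^sub>R y) \<le> ereal (1 - l) * (ereal t * g x) + ereal l * (ereal t * g y)" .
qed

lemma lsc_fun_add_continuous: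
  assumes "lsc_fun h" and "continuous_on UNIV c"
  shows "lsc_fun (\<lambda>v. h v + ereal (c v))"
  unfolding lsc_fun_def
proof (intro allI impI)
  fix x and X :: "nat \<Rightarrow> 'a" assume X: "X \<longlonglongrightarrow> x"
  have "(\<lambda>k. ereal (c (X k))) \<longlonglongrightarrow> ereal (c x)"
    using X assms(2) by (intro tendsto_intros) (auto intro: continuous_on_tendsto_compose)
  hence lim: "liminf (\<lambda>k. ereal (c (X k)) + h (X k)) = ereal (c x) + liminf (\<lambda>k. h (X k))"
    by (rule ereal_liminf_lim_add) simp
  have "h x + ereal (c x) \<le> liminf (\<lambda>k. h (X k)) + ereal (c x)"
    using assms(1)[unfolded lsc_fun_def, rule_format, OF X] by (rule add_right_mono)
  also have "\<dots> = liminf (\<lambda>k. ereal (c (X k)) + h (X k))"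
    using lim by (simp add: add.commute)
  finally show "h x + ereal (c x) \<le> liminf (\<lambda>k. h (X k) + ereal (c (X k)))"
    by (simp add: add.commute)
qed

lemma lsc_fun_attains_min_on_compact:
  fixes G :: "'a::metric_space \<Rightarrow> ereal"
  assumes lsc: "lsc_fun G" and K: "compact K" "K \<noteq> {}"
  shows "\<exists>p\<in>K. \<forall>v\<in>K. G p \<le> G v"
proof -
  obtain u where u: "\<forall>n. u n \<in> G ` K" "u \<longlonglongrightarrow> Inf (G ` K)"
    using Inf_as_limit[of "G ` K"] K(2) by blast
  hence "\<forall>n. \<exists>y. y \<in> K \<and> G y = u n" by (metis imageE)
  then obtain X where X: "\<And>n. X n \<in> K" "\<And>n. G (X n) = u n"
    by metis
  obtain q r where qr: "q \<in> K" "strict_mono r" "(X \<circ> r) \<longlonglongrightarrow> q"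
    using compact_imp_seq_compact[OF K(1)] X(1) unfolding seq_compact_def by meson
  have "G q \<le> liminf (\<lambda>n. G ((X \<circ> r) n))"
    using lsc[unfolded lsc_fun_def, rule_format, OF qr(3)] .
  also have "(\<lambda>n. G ((X \<circ> r) n)) = u \<circ> r" by (simp add: X(2) o_def)
  also have "liminf (u \<circ> r) = Inf (G ` K)"
    by (intro lim_imp_Liminf LIMSEQ_subseq_LIMSEQ[OF u(2) qr(2)]) simp
  finally show ?thesis
    using qr(1) by (meson INF_lower order_trans)
qed

locale proper_lsc_convex =
  fixes h :: "'a::euclidean_space \<Rightarrow> ereal"
  assumes proper: "proper_fun h" and lsc: "lsc_fun h" and convex: "convex_efun h"
begin

definition prox_objective :: "'a \<Rightarrow> 'a \<Rightarrow> ereal" where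
  "prox_objective x v = h v + ereal ((norm (v - x))\<^sup>2 / 2)"

lemma finite_value_of_less_PInf: "h v < \<infinity> \<Longrightarrow> \<exists>hv. h v = ereal hv"
  using proper unfolding proper_fun_def by (cases "h v") auto

lemma finite_value_of_prox_objective_le: "prox_objective x v \<le> ereal c \<Longrightarrow> \<exists>hv. h v = ereal hv"
  by (intro finite_value_of_less_PInf) (auto simp: prox_objective_def)

lemma convex_efun_finite:
  assumes "h a = ereal ha" "h b = ereal hb" "0 < l" "l < 1"
  shows "h ((1 - l) *\<^sub>R a + l *\<^sub>R b) \<le> ereal ((1 - l) * ha + l * hb)"
  using convex assms unfolding convex_efun_def by (metis times_ereal.simps(1) plus_ereal.simps(1))

lemma lsc_prox_objective: "lsc_fun (prox_objective x)"
  unfolding prox_objective_def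
  by (intro lsc_fun_add_continuous lsc continuous_intros) auto

text \<open>The convex combination z of p and v0 with norm (z - v0) = 1 lowers the objective
  below its minimum on the unit sphere unless p stays close to v0.\<close>
lemma prox_objective_sublevel_bounded:
  assumes v0: "h v0 = ereal hv0"
  shows "\<exists>R. \<forall>p. prox_objective x p \<le> prox_objective x v0 \<longrightarrow> norm (p - v0) \<le> R"
proof -
  define c0 where "c0 = hv0 + (norm (v0 - x))\<^sup>2 / 2"
  have Gv0: "prox_objective x v0 = ereal c0" by (simp add: prox_objective_def v0 c0_def)
  obtain e :: 'a where "norm e = 1" using vector_choose_size[of 1] by auto
  hence "sphere v0 1 \<noteq> {}" by (auto intro!: exI[of _ "v0 + e"] simp: dist_norm)
  with lsc_fun_attains_min_on_compact[OF lsc_prox_objective compact_sphere]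
  obtain s0 where s0: "\<And>v. v \<in> sphere v0 1 \<Longrightarrow> prox_objective x s0 \<le> prox_objective x v"
    by blast
  define m where "m = real_of_ereal (prox_objective x s0)"
  have "norm (p - v0) \<le> 2 + 2 * \<bar>c0 - m\<bar>" if Gp: "prox_objective x p \<le> ereal c0" for p
  proof (rule ccontr)
    assume far: "\<not> norm (p - v0) \<le> 2 + 2 * \<bar>c0 - m\<bar>"
    define R where "R = norm (p - v0)"
    have R1: "R > 1" using far abs_ge_zero[of "c0 - m"] unfolding R_def by argo
    obtain hp where hp: "h p = ereal hp" using finite_value_of_prox_objective_le[OF Gp] by blast
    have Gpr: "hp + (norm (p - x))\<^sup>2 / 2 \<le> c0" using Gp by (simp add: prox_objective_def hp)
    define l where "l = 1 / R"
    have l: "0 < l" "l < 1" using R1 by (auto simp: l_def)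
    define z where "z = (1 - l) *\<^sub>R v0 + l *\<^sub>R p"
    have "z - v0 = l *\<^sub>R (p - v0)" by (simp add: z_def algebra_simps)
    hence "norm (z - v0) = 1" using R1 by (auto simp: l_def R_def)
    hence "z \<in> sphere v0 1" by (simp add: dist_norm norm_minus_commute)
    hence "prox_objective x s0 \<le> prox_objective x z" by (rule s0)
    also have "\<dots> \<le> ereal ((1 - l) * hv0 + l * hp) + ereal ((norm (z - x))\<^sup>2 / 2)"
      unfolding prox_objective_def z_def by (rule add_right_mono[OF convex_efun_finite[OF v0 hp l]])
    also have "(norm (z - x))\<^sup>2 = (1 - l) * (norm (v0 - x))\<^sup>2 + l * (norm (p - x))\<^sup>2 - l * (1 - l) * R\<^sup>2"
      unfolding z_def R_def norm_convex_comb_diff_sq by (simp only: norm_minus_commute[of v0 p])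
    also have "l * (1 - l) * R\<^sup>2 = R - 1"
      using R1 by (simp add: l_def power2_eq_square field_simps)
    finally have "prox_objective x s0
        \<le> ereal ((1 - l) * c0 + l * (hp + (norm (p - x))\<^sup>2 / 2) - (R - 1) / 2)"
      by (simp add: c0_def algebra_simps add_divide_distrib diff_divide_distrib)
    also have "\<dots> \<le> ereal (c0 - (R - 1) / 2)"
      using mult_left_mono[OF Gpr, of l] l by (simp add: algebra_simps)
    finally have A: "prox_objective x s0 \<le> ereal (c0 - (R - 1) / 2)" .
    from finite_value_of_prox_objective_le[OF A] obtain hs where "h s0 = ereal hs" by blast
    hence "prox_objective x s0 = ereal m" by (simp add: m_def prox_objective_def)
    with A have "m \<le> c0 - (R - 1) / 2" by simp
    hence "R \<le> 1 + 2 * (c0 - m)" by argo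
    thus False using far unfolding R_def by argo
  qed
  hence "\<forall>p. prox_objective x p \<le> prox_objective x v0 \<longrightarrow> norm (p - v0) \<le> 2 + 2 * \<bar>c0 - m\<bar>"
    unfolding Gv0 by blast
  thus ?thesis by blast
qed

lemma prox_objective_has_minimizer: "\<exists>p. \<forall>v. prox_objective x p \<le> prox_objective x v"
proof -
  obtain v0 hv0 where v0: "h v0 = ereal hv0"
    using proper finite_value_of_less_PInf unfolding proper_fun_def by blast
  obtain R where R: "\<And>p. prox_objective x p \<le> prox_objective x v0 \<Longrightarrow> norm (p - v0) \<le> R"
    using prox_objective_sublevel_bounded[OF v0] by blast
  have "v0 \<in> cball v0 R" using R[of v0] by simp
  with lsc_fun_attains_min_on_compact[OF lsc_prox_objective compact_cball]
  obtain p where p: "p \<in> cball v0 R" "\<And>v. v \<in> cball v0 R \<Longrightarrow> prox_objective x p \<le> prox_objective x v"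
    by blast
  have "prox_objective x p \<le> prox_objective x v" for v
  proof (cases "v \<in> cball v0 R")
    case False
    hence "\<not> prox_objective x v \<le> prox_objective x v0"
      using R[of v] by (auto simp: dist_norm norm_minus_commute)
    hence "prox_objective x v0 < prox_objective x v" by simp
    moreover have "prox_objective x p \<le> prox_objective x v0" using p \<open>v0 \<in> cball v0 R\<close> by blast
    ultimately show ?thesis by simp
  qed (use p in blast)
  thus ?thesis by blast
qed

lemma prox_minimizes: "prox_objective x (prox h x) \<le> prox_objective x v"
  using someI_ex[OF prox_objective_has_minimizer[of x]]
  unfolding prox_def prox_objective_def by blast

lemma prox_finite_value: "\<exists>hp. h (prox h x) = ereal hp"
proof -
  obtain v hv where "h v = ereal hv"
    using proper finite_value_of_less_PInf unfolding proper_fun_def by blast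
  thus ?thesis
    using prox_minimizes[of x v] by (intro finite_value_of_prox_objective_le) (auto simp: prox_objective_def)
qed

text \<open>Strong convexity of the objective: it grows quadratically away from its minimiser.\<close>
lemma prox_three_point:
  assumes hp: "h (prox h x) = ereal hp" and hv: "h v = ereal hv"
  shows "hp + (norm (prox h x - x))\<^sup>2 / 2 + (norm (prox h x - v))\<^sup>2 / 2 \<le> hv + (norm (v - x))\<^sup>2 / 2"
proof (rule real_le_of_forall_small_mult)
  fix l :: real assume l: "0 < l" "l < 1"
  define p where "p = prox h x"
  define z where "z = (1 - l) *\<^sub>R p + l *\<^sub>R v"
  have "prox_objective x p \<le> prox_objective x z" unfolding p_def by (rule prox_minimizes)
  also have "\<dots> \<le> ereal ((1 - l) * hp + l * hv) + ereal ((norm (z - x))\<^sup>2 / 2)"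
    unfolding prox_objective_def z_def
    by (rule add_right_mono[OF convex_efun_finite[OF hp[folded p_def] hv l]])
  finally have "hp + (norm (p - x))\<^sup>2 / 2 \<le> (1 - l) * hp + l * hv + (norm (z - x))\<^sup>2 / 2"
    by (simp add: prox_objective_def hp[folded p_def])
  also have "(norm (z - x))\<^sup>2
      = (1 - l) * (norm (p - x))\<^sup>2 + l * (norm (v - x))\<^sup>2 - l * (1 - l) * (norm (p - v))\<^sup>2"
    unfolding z_def by (rule norm_convex_comb_diff_sq)
  finally have le: "hp + (norm (p - x))\<^sup>2 / 2 \<le> (1 - l) * hp + l * hv
      + ((1 - l) * (norm (p - x))\<^sup>2 + l * (norm (v - x))\<^sup>2 - l * (1 - l) * (norm (p - v))\<^sup>2) / 2" .
  have "(1 - l) * hp + l * hv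
      + ((1 - l) * (norm (p - x))\<^sup>2 + l * (norm (v - x))\<^sup>2 - l * (1 - l) * (norm (p - v))\<^sup>2) / 2
      - (hp + (norm (p - x))\<^sup>2 / 2)
      = l * ((hv + (norm (v - x))\<^sup>2 / 2 + l * ((norm (p - v))\<^sup>2 / 2))
             - (hp + (norm (p - x))\<^sup>2 / 2 + (norm (p - v))\<^sup>2 / 2))"
    by (simp add: field_simps)
  with le have "0 \<le> l * ((hv + (norm (v - x))\<^sup>2 / 2 + l * ((norm (p - v))\<^sup>2 / 2))
             - (hp + (norm (p - x))\<^sup>2 / 2 + (norm (p - v))\<^sup>2 / 2))"
    by linarith
  with l show "hp + (norm (prox h x - x))\<^sup>2 / 2 + (norm (prox h x - v))\<^sup>2 / 2
      \<le> hv + (norm (v - x))\<^sup>2 / 2 + l * ((norm (prox h x - v))\<^sup>2 / 2)"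
    unfolding p_def[symmetric] by (simp only: zero_le_mult_iff) linarith
qed

lemma prox_nonexpansive: "1-lipschitz_on UNIV (prox h)"
proof (rule lipschitz_onI)
  fix x y
  define p q where "p = prox h x" and "q = prox h y"
  obtain hp hq where hp: "h p = ereal hp" and hq: "h q = ereal hq"
    using prox_finite_value unfolding p_def q_def by blast
  have "(norm (p - x))\<^sup>2 + (norm (q - y))\<^sup>2 + 2 * (norm (p - q))\<^sup>2 \<le> (norm (q - x))\<^sup>2 + (norm (p - y))\<^sup>2"
    using prox_three_point[OF hp[unfolded p_def] hq] prox_three_point[OF hq[unfolded q_def] hp]
    by (simp add: p_def q_def norm_minus_commute)
  moreover have "(norm (q - x))\<^sup>2 + (norm (p - y))\<^sup>2 - (norm (p - x))\<^sup>2 - (norm (q - y))\<^sup>2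
      = 2 * inner (p - q) (x - y)"
    by (simp add: power2_norm_eq_inner inner_diff_left inner_diff_right inner_commute)
  ultimately have "(norm (p - q))\<^sup>2 \<le> inner (p - q) (x - y)" by argo
  also have "\<dots> \<le> norm (p - q) * norm (x - y)" by (rule norm_cauchy_schwarz)
  finally have "norm (p - q) \<le> norm (x - y)"
    by (cases "p = q") (simp_all add: power2_eq_square)
  thus "dist (prox h x) (prox h y) \<le> 1 * dist x y"
    by (simp add: p_def q_def dist_norm)
qed simp

end

lemma forward_backward_nonexpansive:
  fixes f :: "'a::euclidean_space \<Rightarrow> real" and g :: "'a \<Rightarrow> ereal"
  assumes cv: "convex_on UNIV f" and gd: "\<And>z. GDERIV f z :> gf z"
    and L: "L > 0" and lip: "L-lipschitz_on UNIV gf" and t: "0 < t" "t \<le> 1 / L"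
    and g: "proper_fun g" "lsc_fun g" "convex_efun g"
  shows "1-lipschitz_on UNIV (\<lambda>x. prox (\<lambda>z. ereal t * g z) (x - t *\<^sub>R gf x))"
proof -
  interpret proper_lsc_convex "\<lambda>z. ereal t * g z"
    using t(1) g by unfold_locales (simp_all add: proper_fun_scale lsc_fun_scale convex_efun_scale)
  show ?thesis
    using lipschitz_on_compose2[OF gradient_step_nonexpansive[OF cv gd L lip t]
        lipschitz_on_subset[OF prox_nonexpansive subset_UNIV]]
    by simp
qed

section \<open>Nonexpansive maps and variational inequalities\<close>

lemma closed_fixpts:
  fixes W :: "'a::t2_space \<Rightarrow> 'a"
  assumes "continuous_on UNIV W"
  shows "closed (fixpts W)"
  unfolding fixpts_def by (rule closed_Collect_eq[OF assms continuous_on_id])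

lemma convex_fixpts:
  fixes W :: "'a::real_inner \<Rightarrow> 'a"
  assumes W: "1-lipschitz_on UNIV W"
  shows "convex (fixpts W)"
  unfolding convex_alt
proof (intro ballI allI impI)
  fix x y and l :: real
  assume x: "x \<in> fixpts W" and y: "y \<in> fixpts W" and l: "0 \<le> l \<and> l \<le> 1"
  define z where "z = (1 - l) *\<^sub>R x + l *\<^sub>R y"
  have "z - x = l *\<^sub>R (y - x)" and "z - y = (1 - l) *\<^sub>R (x - y)"
    by (simp_all add: z_def algebra_simps)
  hence "norm (W z - x) \<le> l * norm (x - y)" and "norm (W z - y) \<le> (1 - l) * norm (x - y)"
    using lipschitz_on_normD[OF W, of z x] lipschitz_on_normD[OF W, of z y] x y l
    by (simp_all add: fixpts_def norm_minus_commute)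
  hence "(norm (W z - x))\<^sup>2 \<le> l\<^sup>2 * (norm (x - y))\<^sup>2"
    and "(norm (W z - y))\<^sup>2 \<le> (1 - l)\<^sup>2 * (norm (x - y))\<^sup>2"
    by (simp_all add: power_mono flip: power_mult_distrib)
  hence "(norm (z - W z))\<^sup>2 \<le> (1 - l) * (l\<^sup>2 * (norm (x - y))\<^sup>2) + l * ((1 - l)\<^sup>2 * (norm (x - y))\<^sup>2)
      - l * (1 - l) * (norm (x - y))\<^sup>2"
    unfolding z_def norm_convex_comb_diff_sq
    using l by (intro diff_right_mono add_mono mult_left_mono) (auto simp: norm_minus_commute)
  also have "\<dots> = 0" by (simp add: power2_eq_square algebra_simps)
  finally have "W z = z" by simp
  thus "(1 - l) *\<^sub>R x + l *\<^sub>R y \<in> fixpts W" by (simp add: fixpts_def z_def)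
qed

lemma nonexpansive_fixpts_inner_ge:
  fixes W :: "'a::real_inner \<Rightarrow> 'a"
  assumes W: "1-lipschitz_on UNIV W" and y: "y \<in> fixpts W"
  shows "0 \<le> inner (x - W x) (x - y)"
proof -
  have "norm ((x - y) - (x - W x)) \<le> norm (x - y)"
    using lipschitz_on_normD[OF W, of x y] y by (simp add: fixpts_def)
  hence "(norm ((x - y) - (x - W x)))\<^sup>2 \<le> (norm (x - y))\<^sup>2"
    by (simp add: power_mono)
  hence "(norm (x - y))\<^sup>2 - 2 * inner (x - y) (x - W x) + (norm (x - W x))\<^sup>2 \<le> (norm (x - y))\<^sup>2"
    by (simp only: norm_diff_power2)
  hence "(norm (x - W x))\<^sup>2 \<le> 2 * inner (x - W x) (x - y)"
    by (simp add: inner_commute)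
  thus ?thesis
    using zero_le_power2[of "norm (x - W x)"] by linarith
qed

definition vi_set :: "('a::real_inner \<Rightarrow> 'a) \<Rightarrow> 'a set \<Rightarrow> 'a set" where
  "vi_set T F = {y \<in> F. \<forall>z \<in> F. 0 \<le> inner (y - T y) (z - y)}"

lemma closed_vi_set:
  assumes T: "continuous_on UNIV T" and F: "closed F"
  shows "closed (vi_set T F)"
proof -
  have "vi_set T F = F \<inter> (\<Inter>z\<in>F. {y. 0 \<le> inner (y - T y) (z - y)})"
    unfolding vi_set_def by auto
  moreover have "closed {y. 0 \<le> inner (y - T y) (z - y)}" for z
    using T by (intro closed_Collect_le continuous_intros) auto
  ultimately show ?thesis using F by (simp add: closed_INT closed_Int)
qed

text \<open>Minty's lemma; I - T is monotone and continuous.\<close>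
lemma vi_set_Minty:
  assumes T: "1-lipschitz_on UNIV T" and F: "convex F"
  shows "vi_set T F = {y \<in> F. \<forall>z \<in> F. 0 \<le> inner (z - T z) (z - y)}"
proof (intro set_eqI iffI)
  fix y assume y: "y \<in> vi_set T F"
  have "0 \<le> inner (z - T z) (z - y)" if z: "z \<in> F" for z
  proof -
    have "inner (T z - T y) (z - y) \<le> norm (T z - T y) * norm (z - y)" by (rule norm_cauchy_schwarz)
    also have "\<dots> \<le> norm (z - y) * norm (z - y)"
      using lipschitz_on_normD[OF T, of z y] by (intro mult_right_mono) auto
    finally have "inner (T z - T y) (z - y) \<le> inner (z - y) (z - y)"
      by (simp add: dot_square_norm power2_eq_square)
    moreover have "0 \<le> inner (y - T y) (z - y)" using y z by (simp add: vi_set_def)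
    ultimately show ?thesis by (simp add: inner_diff_left algebra_simps)
  qed
  thus "y \<in> {y \<in> F. \<forall>z \<in> F. 0 \<le> inner (z - T z) (z - y)}"
    using y by (simp add: vi_set_def)
next
  fix y assume y: "y \<in> {y \<in> F. \<forall>z \<in> F. 0 \<le> inner (z - T z) (z - y)}"
  have "0 \<le> inner (y - T y) (z - y)" if z: "z \<in> F" for z
  proof -
    define zl where "zl = (\<lambda>l::real. y + l *\<^sub>R (z - y))"
    have "isCont T v" for v
      using lipschitz_on_continuous_within[OF T] by simp
    moreover have "(zl \<longlongrightarrow> y) (at_right 0)"
      unfolding zl_def by (auto intro!: tendsto_eq_intros)
    ultimately have "((\<lambda>l. inner (zl l - T (zl l)) (z - y)) \<longlongrightarrow> inner (y - T y) (z - y)) (at_right 0)"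
      by (intro tendsto_intros isCont_tendsto_compose[where g = T])
    moreover have "eventually (\<lambda>l. l \<in> {0<..<1}) (at_right (0::real))"
      by (rule eventually_at_right_real) simp
    hence "eventually (\<lambda>l. 0 \<le> inner (zl l - T (zl l)) (z - y)) (at_right 0)"
    proof eventually_elim
      case (elim l)
      have "zl l = (1 - l) *\<^sub>R y + l *\<^sub>R z" by (simp add: zl_def algebra_simps)
      hence "zl l \<in> F" using F y z elim unfolding convex_alt by auto
      hence "0 \<le> inner (zl l - T (zl l)) (zl l - y)" using y by blast
      also have "zl l - y = l *\<^sub>R (z - y)" by (simp add: zl_def)
      finally show ?case using elim by (simp add: zero_le_mult_iff)
    qed
    ultimately show ?thesis
      by (simp add: tendsto_lowerbound)
  qed
  thus "y \<in> vi_set T F" using y by (simp add: vi_set_def)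
qed

lemma convex_vi_set:
  assumes T: "1-lipschitz_on UNIV T" and F: "convex F"
  shows "convex (vi_set T F)"
  unfolding vi_set_Minty[OF T F] convex_alt
proof (intro ballI allI impI CollectI conjI)
  fix y1 y2 and u :: real
  assume y: "y1 \<in> {y \<in> F. \<forall>z \<in> F. 0 \<le> inner (z - T z) (z - y)}"
    "y2 \<in> {y \<in> F. \<forall>z \<in> F. 0 \<le> inner (z - T z) (z - y)}" and u: "0 \<le> u \<and> u \<le> 1"
  show "(1 - u) *\<^sub>R y1 + u *\<^sub>R y2 \<in> F" using F y u unfolding convex_alt by auto
  fix z assume z: "z \<in> F"
  have "z - ((1 - u) *\<^sub>R y1 + u *\<^sub>R y2) = (1 - u) *\<^sub>R (z - y1) + u *\<^sub>R (z - y2)"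
    by (simp add: algebra_simps)
  moreover have "0 \<le> inner (z - T z) (z - y1)" "0 \<le> inner (z - T z) (z - y2)" using y z by auto
  ultimately show "0 \<le> inner (z - T z) (z - ((1 - u) *\<^sub>R y1 + u *\<^sub>R y2))"
    using u by (simp add: inner_add_right)
qed

lemma strongly_convex_attains_min_on_closed:
  fixes \<omega> :: "'a::euclidean_space \<Rightarrow> real"
  assumes sc: "strongly_convex \<mu> \<omega>" and \<mu>: "\<mu> > 0" and gd: "\<And>z. GDERIV \<omega> z :> g z"
    and C: "closed C" "C \<noteq> {}"
  shows "\<exists>p\<in>C. \<forall>y\<in>C. \<omega> p \<le> \<omega> y"
proof -
  obtain y0 where y0: "y0 \<in> C" using C by blast
  define R where "R = 2 * (norm (g 0) + \<bar>\<omega> y0 - \<omega> 0\<bar>) / \<mu> + 2"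
  have far: "\<omega> y0 < \<omega> x" if x: "norm x > R" for x
  proof -
    define \<rho> where "\<rho> = norm x"
    have \<rho>1: "\<rho> > 1" using x \<mu> by (simp add: \<rho>_def R_def) (smt (verit) divide_nonneg_pos norm_ge_zero)
    have "\<mu> * \<rho> / 2 > \<mu> * R / 2" using x \<mu> by (simp add: \<rho>_def)
    moreover have "\<mu> * R / 2 = norm (g 0) + \<bar>\<omega> y0 - \<omega> 0\<bar> + \<mu>" using \<mu> by (simp add: R_def field_simps)
    ultimately have a: "\<mu> * \<rho> / 2 - norm (g 0) > \<bar>\<omega> y0 - \<omega> 0\<bar>" using \<mu> by argo
    have "\<rho> * (\<mu> * \<rho> / 2 - norm (g 0)) \<ge> 1 * (\<mu> * \<rho> / 2 - norm (g 0))"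
      using \<rho>1 a by (intro mult_right_mono) auto
    hence b: "\<mu> / 2 * \<rho>\<^sup>2 - norm (g 0) * \<rho> > \<bar>\<omega> y0 - \<omega> 0\<bar>"
      using a by (simp add: power2_eq_square algebra_simps)
    have "- (norm (g 0) * \<rho>) \<le> inner (g 0) x"
      using norm_cauchy_schwarz[of "- g 0" x] by (simp add: \<rho>_def)
    hence "\<omega> 0 - norm (g 0) * \<rho> + \<mu> / 2 * \<rho>\<^sup>2 \<le> \<omega> x"
      using strongly_convex_gderiv_le[OF sc gd, of 0 x] by (simp add: \<rho>_def)
    thus ?thesis using b by argo
  qed
  have "\<not> norm y0 > R" using far[of y0] by auto
  hence y0K: "y0 \<in> C \<inter> cball 0 R" using y0 by simp
  have "compact (C \<inter> cball 0 R)" using C(1) by (simp add: closed_Int_compact)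
  from continuous_attains_inf[OF this _ continuous_on_subset[OF gderiv_continuous_on[OF gd] subset_UNIV]]
  obtain p where p: "p \<in> C \<inter> cball 0 R" "\<And>y. y \<in> C \<inter> cball 0 R \<Longrightarrow> \<omega> p \<le> \<omega> y"
    using y0K by blast
  show ?thesis
  proof (intro bexI ballI)
    fix y assume y: "y \<in> C"
    show "\<omega> p \<le> \<omega> y"
    proof (cases "norm y \<le> R")
      case True thus ?thesis using y p(2) by simp
    next
      case False thus ?thesis using far[of y] p(2)[OF y0K] by simp
    qed
  qed (use p in simp)
qed

lemma convex_min_gderiv_inner_ge:
  fixes \<omega> :: "'a::real_inner \<Rightarrow> real"
  assumes C: "convex C" and p: "p \<in> C" "\<And>y. y \<in> C \<Longrightarrow> \<omega> p \<le> \<omega> y"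
    and gd: "\<And>z. GDERIV \<omega> z :> g z" and y: "y \<in> C"
  shows "0 \<le> inner (g p) (y - p)"
proof -
  have "inner (y - p) (- g p) \<le> 0"
  proof (rule gderiv_directional_le[where f = "\<lambda>x. - \<omega> x" and g = "\<lambda>z. - g z"])
    show "GDERIV (\<lambda>x. - \<omega> x) z :> - g z" for z by (rule GDERIV_minus[OF gd])
    fix l :: real assume l: "0 < l" "l < 1"
    have "p + l *\<^sub>R (y - p) = (1 - l) *\<^sub>R p + l *\<^sub>R y" by (simp add: algebra_simps)
    hence "p + l *\<^sub>R (y - p) \<in> C" using C p(1) y l unfolding convex_alt by auto
    thus "- \<omega> (p + l *\<^sub>R (y - p)) \<le> - \<omega> p + l * 0" using p(2) by simp
  qed
  thus ?thesis by (simp add: inner_commute)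
qed

lemma contraction_vi_unique:
  fixes S :: "'a::real_inner \<Rightarrow> 'a"
  assumes S: "r-lipschitz_on UNIV S" and r: "r < 1"
    and z1: "0 \<le> inner (z1 - S z1) (z2 - z1)" and z2: "0 \<le> inner (z2 - S z2) (z1 - z2)"
  shows "z1 = z2"
proof -
  have "inner (z1 - S z1) (z2 - z1) + inner (z2 - S z2) (z1 - z2)
      = inner (S z1 - S z2) (z1 - z2) - (norm (z1 - z2))\<^sup>2"
    by (simp add: power2_norm_eq_inner inner_diff_left inner_diff_right inner_commute algebra_simps)
  with z1 z2 have "(norm (z1 - z2))\<^sup>2 \<le> inner (S z1 - S z2) (z1 - z2)" by linarith
  also have "\<dots> \<le> norm (S z1 - S z2) * norm (z1 - z2)" by (rule norm_cauchy_schwarz)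
  also have "\<dots> \<le> r * norm (z1 - z2) * norm (z1 - z2)"
    using lipschitz_on_normD[OF S, of z1 z2] by (intro mult_right_mono) auto
  finally have "(1 - r) * (norm (z1 - z2))\<^sup>2 \<le> 0"
    by (simp add: power2_eq_square algebra_simps)
  thus ?thesis using r by (simp add: mult_le_0_iff)
qed

section \<open>Sequences\<close>

lemma recursive_ineq_tendsto_zero:
  fixes a g d :: "nat \<Rightarrow> real"
  assumes a0: "\<And>n. 0 \<le> a n" and g: "\<And>n. 0 \<le> g n" "\<And>n. g n \<le> 1"
    and rec: "eventually (\<lambda>n. a (Suc n) \<le> (1 - g n) * a n + g n * d n) sequentially"
    and gdiv: "filterlim (\<lambda>n. \<Sum>k<n. g k) at_top sequentially"
    and dlim: "\<And>e. e > 0 \<Longrightarrow> eventually (\<lambda>n. d n \<le> e) sequentially"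
  shows "a \<longlonglongrightarrow> 0"
proof (rule LIMSEQ_I)
  fix e :: real assume "e > 0"
  define \<epsilon> where "\<epsilon> = e / 3"
  have \<epsilon>: "\<epsilon> > 0" using \<open>e > 0\<close> by (simp add: \<epsilon>_def)
  obtain N where N: "\<And>n. n \<ge> N \<Longrightarrow> a (Suc n) \<le> (1 - g n) * a n + g n * d n \<and> d n \<le> \<epsilon>"
    using eventually_conj[OF rec dlim[OF \<epsilon>]] unfolding eventually_sequentially by blast
  define b where "b = (\<lambda>n. max (a n - \<epsilon>) 0)"
  have b0: "0 \<le> b n" for n by (simp add: b_def)
  have step: "b (Suc n) \<le> (1 - g n) * b n" if "n \<ge> N" for n
  proof -
    have "a (Suc n) - \<epsilon> \<le> (1 - g n) * (a n - \<epsilon>) + g n * (d n - \<epsilon>)"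
      using N[OF that] by (simp add: algebra_simps)
    also have "g n * (d n - \<epsilon>) \<le> 0" using N[OF that] g(1)[of n] by (simp add: mult_nonneg_nonpos)
    also have "(1 - g n) * (a n - \<epsilon>) \<le> (1 - g n) * b n"
      using g(2)[of n] by (intro mult_left_mono) (auto simp: b_def)
    finally show ?thesis using g(2)[of n] b0[of n] by (simp add: b_def)
  qed
  have decay: "b (N + m) \<le> b N * exp (- (\<Sum>k\<in>{N..<N + m}. g k))" for m
  proof (induction m)
    case (Suc m)
    have "b (N + Suc m) \<le> (1 - g (N + m)) * b (N + m)" using step[of "N + m"] by simp
    also have "\<dots> \<le> exp (- g (N + m)) * b (N + m)"
      using exp_ge_add_one_self[of "- g (N + m)"] b0[of "N + m"] by (intro mult_right_mono) auto
    also have "\<dots> \<le> exp (- g (N + m)) * (b N * exp (- (\<Sum>k\<in>{N..<N + m}. g k)))"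
      using Suc by (intro mult_left_mono) auto
    also have "\<dots> = b N * exp (- (\<Sum>k\<in>{N..<N + Suc m}. g k))"
      by (simp add: exp_add[symmetric] algebra_simps)
    finally show ?case .
  qed simp
  define c where "c = ln ((b N + 1) / \<epsilon>)"
  have ec: "b N * exp (- c) \<le> \<epsilon>"
    using \<epsilon> b0[of N] by (simp add: c_def exp_minus field_simps)
  obtain N' where N': "\<And>n. n \<ge> N' \<Longrightarrow> (\<Sum>k<N. g k) + c \<le> (\<Sum>k<n. g k)"
    using gdiv unfolding filterlim_at_top eventually_sequentially by blast
  show "\<exists>no. \<forall>n\<ge>no. norm (a n - 0) < e"
  proof (intro exI allI impI)
    fix n assume n: "n \<ge> max N N'"
    then obtain m where m: "n = N + m" by (metis le_add_diff_inverse max.boundedE)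
    have "(\<Sum>k\<in>{N..<n}. g k) = (\<Sum>k<n. g k) - (\<Sum>k<N. g k)"
      using sum_diff_nat_ivl[of 0 N n g] n by (simp add: atLeast0LessThan)
    hence "exp (- (\<Sum>k\<in>{N..<n}. g k)) \<le> exp (- c)" using N'[of n] n by simp
    hence "b n \<le> b N * exp (- c)"
      using decay[of m] m b0[of N] by (metis mult_left_mono order_trans)
    hence "b n \<le> \<epsilon>" using ec by linarith
    hence "a n \<le> 2 * \<epsilon>" by (simp add: b_def)
    thus "norm (a n - 0) < e" using a0[of n] \<epsilon> by (simp add: \<epsilon>_def)
  qed
qed

lemma eventually_less_of_limsup_less:
  assumes "limsup (\<lambda>k. ereal (f k)) < ereal c"
  shows "eventually (\<lambda>k. f k < c) sequentially"
  using Limsup_lessD[OF assms] by simp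

lemma not_eventually_imp_subseq:
  assumes "\<not> eventually P sequentially"
  shows "\<exists>\<sigma>::nat \<Rightarrow> nat. strict_mono \<sigma> \<and> (\<forall>n. \<not> P (\<sigma> n))"
proof -
  have "infinite {n. \<not> P n}"
    using assms unfolding infinite_nat_iff_unbounded_le eventually_sequentially by auto
  from infinite_enumerate[OF this] show ?thesis by (simp add: mem_Collect_eq)
qed

lemma filterlim_sum_mult_at_top:
  fixes a :: "nat \<Rightarrow> real"
  assumes "filterlim (\<lambda>n. \<Sum>k<n. a k) at_top sequentially" and "c > 0"
  shows "filterlim (\<lambda>n. \<Sum>k<n. c * a k) at_top sequentially"
  using filterlim_tendsto_pos_mult_at_top[OF tendsto_const assms(2) assms(1)]
  by (simp only: sum_distrib_left)

lemma filterlim_sum_Suc_mult_at_top: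
  fixes a :: "nat \<Rightarrow> real"
  assumes "filterlim (\<lambda>n. \<Sum>k<n. a k) at_top sequentially" and "c > 0"
  shows "filterlim (\<lambda>n. \<Sum>k<n. c * a (Suc k)) at_top sequentially"
proof (rule filterlim_sum_mult_at_top[OF _ assms(2)])
  have "filterlim (\<lambda>n. (\<lambda>n. \<Sum>k<n. a k) (Suc n)) at_top sequentially"
    using assms(1) by (rule filterlim_sequentially_Suc[THEN iffD2])
  hence "filterlim (\<lambda>n. - a 0 + (\<Sum>k<Suc n. a k)) at_top sequentially"
    by (rule filterlim_tendsto_add_at_top[OF tendsto_const])
  thus "filterlim (\<lambda>n. \<Sum>k<n. a (Suc k)) at_top sequentially"
    by (simp only: sum.lessThan_Suc_shift) simp
qed

section \<open>Convergence of the trilevel iteration\<close>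

text \<open>One step of the recursion for the ratio e/b of step length and \<beta>: the condition on
  1/b' - 1/b keeps b/b' close to 1, so half of the contraction a'(1 - r) survives.\<close>
lemma step_ratio_recursion:
  fixes a' b b' r K e e' M D :: real
  assumes a': "0 < a'" "a' < 1" and b: "0 < b" and b': "0 < b'" and r: "0 \<le> r" "r < 1" and K: "K > 0"
    and q: "1 / a' * \<bar>1 / b' - 1 / b\<bar> \<le> K" and bs: "b < (1 - r) / (2 * K)"
    and e': "e' \<le> (1 - a' * (1 - r)) * e + M * D" and e: "0 \<le> e"
  shows "e' / b' \<le> (1 - (1 - r) / 2 * a') * (e / b) + (1 - r) / 2 * a' * ((2 * M / (1 - r)) * (D / (a' * b')))"
proof -
  have "b * (1 / b' - 1 / b) \<le> b * (K * a')"
    using b q a' by (intro mult_left_mono) (auto simp: field_simps)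
  also have "\<dots> \<le> (1 - r) / (2 * K) * (K * a')" using bs K a' by (intro mult_right_mono) auto
  also have "\<dots> = a' * (1 - r) / 2" using K by (simp add: field_simps)
  finally have "b * (1 / b' - 1 / b) \<le> a' * (1 - r) / 2" .
  moreover have "b / b' = 1 + b * (1 / b' - 1 / b)" using b b' by (simp add: field_simps)
  ultimately have bb: "b / b' \<le> 1 + a' * (1 - r) / 2" by linarith
  define c where "c = 1 - a' * (1 - r)"
  have c0: "0 \<le> c" using mult_mono[of a' 1 "1 - r" 1] a' r by (simp add: c_def)
  have "c * (b / b') \<le> c * (1 + a' * (1 - r) / 2)" using c0 bb by (intro mult_left_mono)
  also have "\<dots> = 1 - a' * (1 - r) / 2 - (a' * (1 - r))\<^sup>2 / 2"
    by (simp add: c_def power2_eq_square field_simps)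
  finally have "c * (b / b') \<le> 1 - a' * (1 - r) / 2 - (a' * (1 - r))\<^sup>2 / 2" .
  moreover have "(1 - r) / 2 * a' = a' * (1 - r) / 2" by simp
  ultimately have cb: "c * (b / b') \<le> 1 - (1 - r) / 2 * a'"
    using zero_le_power2[of "a' * (1 - r)"] by linarith
  have "e' / b' \<le> (c * e + M * D) / b'" using e' b' by (simp add: c_def divide_right_mono)
  also have "\<dots> = (c * (b / b')) * (e / b) + M * D / b'" using b b' by (simp add: field_simps)
  also have "(c * (b / b')) * (e / b) \<le> (1 - (1 - r) / 2 * a') * (e / b)"
    using cb e b by (intro mult_right_mono) auto
  also have "M * D / b' = (1 - r) / 2 * a' * ((2 * M / (1 - r)) * (D / (a' * b')))"
    using a' b' r by (simp add: field_simps)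
  finally show ?thesis by simp
qed

locale trilevel_iteration =
  fixes S T W :: "'a::euclidean_space \<Rightarrow> 'a" and \<alpha> \<beta> :: "nat \<Rightarrow> real" and x :: "nat \<Rightarrow> 'a"
    and r B :: real
  assumes S_contraction: "r-lipschitz_on UNIV S" and r_less_1: "r < 1"
    and T_nonexpansive: "1-lipschitz_on UNIV T" and W_nonexpansive: "1-lipschitz_on UNIV W"
    and \<alpha>_range: "\<And>k. 0 < \<alpha> k \<and> \<alpha> k < 1"
    and \<beta>_range: "\<And>k. 0 < \<beta> k \<and> \<beta> k < 1"
    and iter: "\<And>k. x (Suc k) = \<alpha> k *\<^sub>R S (x k) + ((1 - \<alpha> k) * \<beta> k) *\<^sub>R T (x k)
                              + ((1 - \<alpha> k) * (1 - \<beta> k)) *\<^sub>R W (x k)"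
    and ratio_lim: "filterlim (\<lambda>k. \<beta> k / \<alpha> k) at_top sequentially"
    and \<alpha>_div: "filterlim (\<lambda>n. \<Sum>k<n. \<alpha> k) at_top sequentially"
    and K_cond: "\<exists>K>0. limsup (\<lambda>k. ereal (1 / \<alpha> (Suc k) * \<bar>1 / \<beta> (Suc k) - 1 / \<beta> k\<bar>)) \<le> ereal K"
    and diff_cond: "limsup (\<lambda>k. ereal ((\<bar>\<beta> (Suc k) - \<beta> k\<bar> + \<bar>\<alpha> (Suc k) - \<alpha> k\<bar>)
                                     / (\<alpha> (Suc k) * \<beta> (Suc k)))) = 0"
    and B_pos: "B > 0" and x_bound: "\<And>n. norm (x n) \<le> B"
    and A1: "\<forall>\<rho>>0. \<exists>\<theta>>0. \<forall>y. norm y \<le> \<rho> \<longrightarrow> infdist y (fixpts W) \<le> \<theta> * norm (y - W y)"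
    and A2: "limsup (\<lambda>k. ereal ((\<beta> k)\<^sup>2 / \<alpha> k)) = 0"
begin

lemma r_nonneg: "0 \<le> r"
  using lipschitz_on_nonneg[OF S_contraction] .

lemma iter_nested: "x (Suc k) = \<alpha> k *\<^sub>R S (x k) + (1 - \<alpha> k) *\<^sub>R (\<beta> k *\<^sub>R T (x k) + (1 - \<beta> k) *\<^sub>R W (x k))"
  by (simp add: iter algebra_simps)

lemma \<beta>_eventually_less:
  assumes "e > 0"
  shows "eventually (\<lambda>k. \<beta> k < e) sequentially"
proof -
  have "eventually (\<lambda>k. (\<beta> k)\<^sup>2 / \<alpha> k < e\<^sup>2) sequentially"
    using assms A2 by (intro eventually_less_of_limsup_less) simp
  thus ?thesis
  proof eventually_elim
    case (elim k)
    have "(\<beta> k)\<^sup>2 \<le> (\<beta> k)\<^sup>2 / \<alpha> k"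
      using \<alpha>_range[of k] by (simp add: le_divide_eq mult_left_le)
    hence "(\<beta> k)\<^sup>2 < e\<^sup>2" using elim by linarith
    thus ?case by (rule power_less_imp_less_base) (use assms in simp)
  qed
qed

lemma \<beta>_tendsto_zero: "\<beta> \<longlonglongrightarrow> 0"
proof (rule order_tendstoI)
  fix a :: real assume "a < 0"
  thus "eventually (\<lambda>n. a < \<beta> n) sequentially"
    using \<beta>_range by (intro always_eventually allI) (meson less_trans)
qed (rule \<beta>_eventually_less)

lemma \<alpha>_eventually_le_\<beta>:
  assumes "c > 0"
  shows "eventually (\<lambda>k. \<alpha> k \<le> c * \<beta> k) sequentially"
  using ratio_lim assms \<alpha>_range unfolding filterlim_at_top
  by (auto elim!: allE[of _ "1 / c"] eventually_mono simp: field_simps)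

definition M :: real where
  "M = norm (S 0) + norm (T 0) + norm (W 0) + 3 * B"

lemma M_nonneg: "0 \<le> M"
  using B_pos by (simp add: M_def)

lemma images_norm_le: "norm (S (x n)) + norm (T (x n)) + norm (W (x n)) \<le> M"
proof -
  have "norm (S (x n) - S 0) \<le> 1 * norm (x n)"
    using lipschitz_on_normD[OF S_contraction, of "x n" 0] r_less_1 mult_right_mono[of r 1 "norm (x n)"]
    by simp
  moreover have "norm (T (x n) - T 0) \<le> norm (x n)" and "norm (W (x n) - W 0) \<le> norm (x n)"
    using lipschitz_on_normD[OF T_nonexpansive, of "x n" 0] lipschitz_on_normD[OF W_nonexpansive, of "x n" 0]
    by simp_all
  ultimately show ?thesis
    using x_bound[of n] norm_triangle_ineq2[of "S (x n)" "S 0"] norm_triangle_ineq2[of "T (x n)" "T 0"]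
      norm_triangle_ineq2[of "W (x n)" "W 0"]
    unfolding M_def by linarith
qed

lemma residuals_norm_le:
  "norm (x n - S (x n)) \<le> B + M" "norm (x n - T (x n)) \<le> B + M" "norm (x n - W (x n)) \<le> B + M"
  using images_norm_le[of n] x_bound[of n] norm_triangle_ineq4[of "x n" "S (x n)"]
    norm_triangle_ineq4[of "x n" "T (x n)"] norm_triangle_ineq4[of "x n" "W (x n)"]
    norm_ge_zero[of "S (x n)"] norm_ge_zero[of "T (x n)"] norm_ge_zero[of "W (x n)"]
  by linarith+

definition step :: "nat \<Rightarrow> real" where
  "step n = norm (x (Suc n) - x n)"

lemma step_recursion:
  "step (Suc n) \<le> (1 - \<alpha> (Suc n) * (1 - r)) * step n + M * (\<bar>\<beta> (Suc n) - \<beta> n\<bar> + \<bar>\<alpha> (Suc n) - \<alpha> n\<bar>)"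
proof -
  define X X' where "X = x n" and "X' = x (Suc n)"
  define V V' where "V = \<beta> n *\<^sub>R T X + (1 - \<beta> n) *\<^sub>R W X"
    and "V' = \<beta> (Suc n) *\<^sub>R T X' + (1 - \<beta> (Suc n)) *\<^sub>R W X'"
  have \<alpha>': "0 \<le> \<alpha> (Suc n)" "\<alpha> (Suc n) \<le> 1" and \<beta>': "0 \<le> \<beta> (Suc n)" "\<beta> (Suc n) \<le> 1"
    using \<alpha>_range[of "Suc n"] \<beta>_range[of "Suc n"] by auto
  have SX: "norm (S X' - S X) \<le> r * step n"
    using lipschitz_on_normD[OF S_contraction] by (simp add: step_def X_def X'_def)
  have TX: "norm (T X' - T X) \<le> step n" and WX: "norm (W X' - W X) \<le> step n"
    using lipschitz_on_normD[OF T_nonexpansive] lipschitz_on_normD[OF W_nonexpansive]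
    by (simp_all add: step_def X_def X'_def)
  have TW: "norm (T X) + norm (W X) \<le> M"
    using images_norm_le[of n] norm_ge_zero[of "S (x n)"] unfolding X_def by linarith
  have "norm V \<le> norm (T X) + norm (W X)"
    using \<beta>_range[of n] norm_triangle_ineq[of "\<beta> n *\<^sub>R T X" "(1 - \<beta> n) *\<^sub>R W X"]
      mult_left_le_one_le[of "norm (T X)" "\<beta> n"] mult_left_le_one_le[of "norm (W X)" "1 - \<beta> n"]
    by (simp add: V_def)
  hence SV: "norm (S X) + norm V \<le> M"
    using images_norm_le[of n] unfolding X_def by linarith
  have "norm (V' - V) \<le> \<beta> (Suc n) * step n + (1 - \<beta> (Suc n)) * step n + \<bar>\<beta> (Suc n) - \<beta> n\<bar> * M"
    using norm_convex_comb_diff_le[of "\<beta> (Suc n)" "T X'" "W X'" "\<beta> n" "T X" "W X", OF \<beta>']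
      mult_left_mono[OF TX, of "\<beta> (Suc n)"] mult_left_mono[OF WX, of "1 - \<beta> (Suc n)"]
      mult_left_mono[OF TW, of "\<bar>\<beta> (Suc n) - \<beta> n\<bar>"] \<beta>'
    unfolding V_def V'_def by linarith
  hence V'V: "norm (V' - V) \<le> step n + \<bar>\<beta> (Suc n) - \<beta> n\<bar> * M"
    by (simp add: algebra_simps)
  have "step (Suc n) = norm ((\<alpha> (Suc n) *\<^sub>R S X' + (1 - \<alpha> (Suc n)) *\<^sub>R V') - (\<alpha> n *\<^sub>R S X + (1 - \<alpha> n) *\<^sub>R V))"
    by (simp add: step_def iter_nested X_def X'_def V_def V'_def)
  also have "\<dots> \<le> \<alpha> (Suc n) * norm (S X' - S X) + (1 - \<alpha> (Suc n)) * norm (V' - V)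
      + \<bar>\<alpha> (Suc n) - \<alpha> n\<bar> * (norm (S X) + norm V)"
    by (rule norm_convex_comb_diff_le[OF \<alpha>'])
  also have "\<dots> \<le> \<alpha> (Suc n) * (r * step n) + (1 - \<alpha> (Suc n)) * (step n + \<bar>\<beta> (Suc n) - \<beta> n\<bar> * M)
      + \<bar>\<alpha> (Suc n) - \<alpha> n\<bar> * M"
    using \<alpha>' SX V'V SV by (intro add_mono mult_left_mono) auto
  also have "\<dots> \<le> (1 - \<alpha> (Suc n) * (1 - r)) * step n + M * (\<bar>\<beta> (Suc n) - \<beta> n\<bar> + \<bar>\<alpha> (Suc n) - \<alpha> n\<bar>)"
    using \<alpha>' mult_left_le_one_le[of "\<bar>\<beta> (Suc n) - \<beta> n\<bar> * M" "1 - \<alpha> (Suc n)"] M_nonneg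
    by (simp add: algebra_simps)
  finally show ?thesis .
qed

lemma step_over_\<beta>_tendsto_zero: "(\<lambda>n. step n / \<beta> n) \<longlonglongrightarrow> 0"
proof (rule recursive_ineq_tendsto_zero[where g = "\<lambda>n. (1 - r) / 2 * \<alpha> (Suc n)"
    and d = "\<lambda>n. (2 * M / (1 - r)) * ((\<bar>\<beta> (Suc n) - \<beta> n\<bar> + \<bar>\<alpha> (Suc n) - \<alpha> n\<bar>) / (\<alpha> (Suc n) * \<beta> (Suc n)))"])
  show "0 \<le> step n / \<beta> n" for n using \<beta>_range[of n] by (simp add: step_def)
  show "0 \<le> (1 - r) / 2 * \<alpha> (Suc n)" "(1 - r) / 2 * \<alpha> (Suc n) \<le> 1" for n
    using \<alpha>_range[of "Suc n"] r_nonneg r_less_1 mult_mono[of "(1 - r) / 2" 1 "\<alpha> (Suc n)" 1] by auto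
  show "filterlim (\<lambda>n. \<Sum>k<n. (1 - r) / 2 * \<alpha> (Suc k)) at_top sequentially"
    using r_less_1 by (intro filterlim_sum_Suc_mult_at_top[OF \<alpha>_div]) simp
next
  fix e :: real assume e: "e > 0"
  have c: "2 * M / (1 - r) \<ge> 0" using M_nonneg r_less_1 by simp
  have "eventually (\<lambda>n. (\<bar>\<beta> (Suc n) - \<beta> n\<bar> + \<bar>\<alpha> (Suc n) - \<alpha> n\<bar>) / (\<alpha> (Suc n) * \<beta> (Suc n))
      < e / (2 * M / (1 - r) + 1)) sequentially"
    using diff_cond e c by (intro eventually_less_of_limsup_less) simp
  thus "eventually (\<lambda>n. (2 * M / (1 - r)) * ((\<bar>\<beta> (Suc n) - \<beta> n\<bar> + \<bar>\<alpha> (Suc n) - \<alpha> n\<bar>) / (\<alpha> (Suc n) * \<beta> (Suc n))) \<le> e) sequentially"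
  proof eventually_elim
    case (elim n)
    have "(2 * M / (1 - r)) * ((\<bar>\<beta> (Suc n) - \<beta> n\<bar> + \<bar>\<alpha> (Suc n) - \<alpha> n\<bar>) / (\<alpha> (Suc n) * \<beta> (Suc n)))
        \<le> (2 * M / (1 - r) + 1) * (e / (2 * M / (1 - r) + 1))"
      using elim c \<alpha>_range[of "Suc n"] \<beta>_range[of "Suc n"] by (intro mult_mono) auto
    thus ?case using c by simp
  qed
next
  obtain K where K: "K > 0" "limsup (\<lambda>k. ereal (1 / \<alpha> (Suc k) * \<bar>1 / \<beta> (Suc k) - 1 / \<beta> k\<bar>)) \<le> ereal K"
    using K_cond by blast
  have "eventually (\<lambda>k. 1 / \<alpha> (Suc k) * \<bar>1 / \<beta> (Suc k) - 1 / \<beta> k\<bar> < K + 1) sequentially"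
    using K(2) by (intro eventually_less_of_limsup_less) (simp add: order.strict_trans1)
  moreover have "eventually (\<lambda>k. \<beta> k < (1 - r) / (2 * (K + 1))) sequentially"
    using K(1) r_less_1 by (intro \<beta>_eventually_less) simp
  ultimately show "eventually (\<lambda>n. step (Suc n) / \<beta> (Suc n) \<le> (1 - (1 - r) / 2 * \<alpha> (Suc n)) * (step n / \<beta> n)
      + (1 - r) / 2 * \<alpha> (Suc n) * ((2 * M / (1 - r))
        * ((\<bar>\<beta> (Suc n) - \<beta> n\<bar> + \<bar>\<alpha> (Suc n) - \<alpha> n\<bar>) / (\<alpha> (Suc n) * \<beta> (Suc n))))) sequentially"
  proof eventually_elim
    case (elim n)
    show ?case
      using step_ratio_recursion[of "\<alpha> (Suc n)" "\<beta> n" "\<beta> (Suc n)" r "K + 1", OF _ _ _ _ r_nonneg r_less_1 _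
          less_imp_le[OF elim(1)] elim(2) step_recursion] \<alpha>_range \<beta>_range K(1)
      by (simp add: step_def add.commute)
  qed
qed

lemma step_eventually_le_\<beta>:
  assumes "c > 0"
  shows "eventually (\<lambda>n. step n \<le> c * \<beta> n) sequentially"
  using tendstoD[OF step_over_\<beta>_tendsto_zero assms]
proof eventually_elim
  case (elim n)
  thus ?case using \<beta>_range[of n] by (simp add: step_def dist_real_def divide_less_eq)
qed

lemma residual_decomposition:
  "x n - x (Suc n) = \<alpha> n *\<^sub>R (x n - S (x n)) + ((1 - \<alpha> n) * \<beta> n) *\<^sub>R (x n - T (x n))
    + ((1 - \<alpha> n) * (1 - \<beta> n)) *\<^sub>R (x n - W (x n))"
  by (simp add: iter algebra_simps)

lemma W_residual_eventually_le_\<beta>: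
  "\<exists>C\<ge>0. eventually (\<lambda>n. norm (x n - W (x n)) \<le> C * \<beta> n) sequentially"
proof (intro exI conjI)
  show "4 * (1 + 2 * (B + M)) \<ge> 0" using B_pos M_nonneg by simp
  have "eventually (\<lambda>n. step n \<le> 1 * \<beta> n \<and> \<alpha> n \<le> 1 * \<beta> n \<and> \<beta> n < 1 / 2) sequentially"
    by (intro eventually_conj step_eventually_le_\<beta> \<alpha>_eventually_le_\<beta> \<beta>_eventually_less) simp_all
  thus "eventually (\<lambda>n. norm (x n - W (x n)) \<le> 4 * (1 + 2 * (B + M)) * \<beta> n) sequentially"
  proof eventually_elim
    case (elim n)
    define a b where "a = \<alpha> n" and "b = \<beta> n"
    have a: "0 < a" "a < 1 / 2" and b: "0 < b" "b < 1 / 2"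
      using \<alpha>_range[of n] \<beta>_range[of n] elim by (auto simp: a_def b_def)
    have eq: "((1 - a) * (1 - b)) *\<^sub>R (x n - W (x n))
        = (x n - x (Suc n)) - a *\<^sub>R (x n - S (x n)) - ((1 - a) * b) *\<^sub>R (x n - T (x n))"
      by (simp add: residual_decomposition a_def b_def)
    have "norm (((1 - a) * (1 - b)) *\<^sub>R (x n - W (x n)))
        \<le> norm (x n - x (Suc n)) + norm (a *\<^sub>R (x n - S (x n))) + norm (((1 - a) * b) *\<^sub>R (x n - T (x n)))"
      unfolding eq
      using norm_triangle_ineq4[of "x n - x (Suc n) - a *\<^sub>R (x n - S (x n))" "((1 - a) * b) *\<^sub>R (x n - T (x n))"]
        norm_triangle_ineq4[of "x n - x (Suc n)" "a *\<^sub>R (x n - S (x n))"]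
      by linarith
    hence "(1 - a) * (1 - b) * norm (x n - W (x n))
        \<le> norm (x n - x (Suc n)) + a * norm (x n - S (x n)) + (1 - a) * b * norm (x n - T (x n))"
      using a b by simp
    also have "\<dots> \<le> b + b * (B + M) + b * (B + M)"
    proof -
      have "norm (x n - x (Suc n)) \<le> b" using elim by (simp add: step_def norm_minus_commute b_def)
      moreover have "a * norm (x n - S (x n)) \<le> b * (B + M)"
        using mult_mono[OF _ residuals_norm_le(1)[of n], of a b] elim a by (simp add: a_def b_def)
      moreover have "(1 - a) * b * norm (x n - T (x n)) \<le> 1 * b * (B + M)"
        using mult_mono[OF _ residuals_norm_le(2)[of n], of "(1 - a) * b" "1 * b"] a b
        by (simp add: mult_right_mono)
      ultimately show ?thesis by simp
    qed
    finally have "(1 - a) * (1 - b) * norm (x n - W (x n)) \<le> b * (1 + 2 * (B + M))"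
      by (simp add: algebra_simps)
    moreover have "1 / 4 \<le> (1 - a) * (1 - b)"
      using a b mult_mono[of "1/2" "1 - a" "1/2" "1 - b"] by simp
    hence "1 / 4 * norm (x n - W (x n)) \<le> (1 - a) * (1 - b) * norm (x n - W (x n))"
      by (intro mult_right_mono) auto
    ultimately show ?case by (simp add: b_def algebra_simps)
  qed
qed

lemma infdist_fixpts_eventually_le_\<beta>:
  "\<exists>C\<ge>0. eventually (\<lambda>n. infdist (x n) (fixpts W) \<le> C * \<beta> n) sequentially"
proof -
  obtain \<theta> where \<theta>: "\<theta> > 0" "\<And>y. norm y \<le> B \<Longrightarrow> infdist y (fixpts W) \<le> \<theta> * norm (y - W y)"
    using A1 B_pos by blast
  obtain C where C: "C \<ge> 0" "eventually (\<lambda>n. norm (x n - W (x n)) \<le> C * \<beta> n) sequentially"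
    using W_residual_eventually_le_\<beta> by blast
  from C(2) have "eventually (\<lambda>n. infdist (x n) (fixpts W) \<le> (\<theta> * C) * \<beta> n) sequentially"
  proof eventually_elim
    case (elim n)
    have "infdist (x n) (fixpts W) \<le> \<theta> * norm (x n - W (x n))" by (rule \<theta>(2)[OF x_bound])
    also have "\<dots> \<le> \<theta> * (C * \<beta> n)" using elim \<theta> by (intro mult_left_mono) auto
    finally show ?case by (simp add: mult.assoc)
  qed
  thus ?thesis using \<theta> C by (intro exI[of _ "\<theta> * C"]) auto
qed

lemma W_residual_tendsto_zero: "(\<lambda>n. norm (x n - W (x n))) \<longlonglongrightarrow> 0"
proof -
  obtain C where C: "C \<ge> 0" "eventually (\<lambda>n. norm (x n - W (x n)) \<le> C * \<beta> n) sequentially"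
    using W_residual_eventually_le_\<beta> by blast
  have "(\<lambda>n. C * \<beta> n) \<longlonglongrightarrow> 0"
    using \<beta>_tendsto_zero by (rule tendsto_mult_right_zero)
  from tendsto_sandwich[OF _ C(2) tendsto_const this] show ?thesis
    by simp
qed

lemma T_inner_eventually_le:
  assumes y: "y \<in> fixpts W" and e: "e > 0"
  shows "eventually (\<lambda>n. inner (x n - T (x n)) (x n - y) \<le> e) sequentially"
proof -
  define D where "D = B + norm y"
  have D: "D > 0" using B_pos by (simp add: D_def add_pos_nonneg)
  define q where "q = D * (1 + B + M)"
  have q: "q > 0" using D B_pos M_nonneg by (simp add: q_def)
  define c where "c = e / (2 * q)"
  have c: "c > 0" using e q by (simp add: c_def)
  have "eventually (\<lambda>n. step n \<le> c * \<beta> n \<and> \<alpha> n \<le> c * \<beta> n \<and> \<alpha> n \<le> 1 * \<beta> n \<and> \<beta> n < 1 / 2) sequentially"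
    using c by (intro eventually_conj step_eventually_le_\<beta> \<alpha>_eventually_le_\<beta> \<beta>_eventually_less) simp_all
  thus ?thesis
  proof eventually_elim
    case (elim n)
    define a b where "a = \<alpha> n" and "b = \<beta> n"
    have a: "0 < a" "a < 1 / 2" and b: "0 < b" "b < 1"
      using \<alpha>_range[of n] \<beta>_range[of n] elim by (auto simp: a_def b_def)
    have ny: "norm (x n - y) \<le> D"
      using norm_triangle_ineq4[of "x n" y] x_bound[of n] by (simp add: D_def)
    have eqv: "((1 - a) * b) *\<^sub>R (x n - T (x n))
        = (x n - x (Suc n)) - a *\<^sub>R (x n - S (x n)) - ((1 - a) * (1 - b)) *\<^sub>R (x n - W (x n))"
      unfolding residual_decomposition a_def b_def by simp
    have "(1 - a) * b * inner (x n - T (x n)) (x n - y)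
        = inner (x n - x (Suc n)) (x n - y) - a * inner (x n - S (x n)) (x n - y)
          - ((1 - a) * (1 - b)) * inner (x n - W (x n)) (x n - y)"
      using arg_cong[OF eqv, of "\<lambda>v. inner v (x n - y)"] by (simp add: inner_diff_left)
    also have "\<dots> \<le> inner (x n - x (Suc n)) (x n - y) - a * inner (x n - S (x n)) (x n - y)"
      using nonexpansive_fixpts_inner_ge[OF W_nonexpansive y, of "x n"] a b by simp
    also have "\<dots> \<le> step n * D + a * ((B + M) * D)"
    proof -
      have "inner (x n - x (Suc n)) (x n - y) \<le> norm (x n - x (Suc n)) * norm (x n - y)"
        by (rule norm_cauchy_schwarz)
      also have "\<dots> \<le> step n * D" using ny by (simp add: step_def norm_minus_commute mult_left_mono)
      finally have "inner (x n - x (Suc n)) (x n - y) \<le> step n * D" .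
      moreover have "- inner (x n - S (x n)) (x n - y) \<le> norm (S (x n) - x n) * norm (x n - y)"
        using norm_cauchy_schwarz[of "S (x n) - x n" "x n - y"] by (simp add: inner_diff_left)
      moreover have "norm (S (x n) - x n) * norm (x n - y) \<le> (B + M) * D"
        using residuals_norm_le(1)[of n] ny B_pos M_nonneg
        by (intro mult_mono) (auto simp: norm_minus_commute)
      ultimately have "- inner (x n - S (x n)) (x n - y) \<le> (B + M) * D" by linarith
      hence "a * (- inner (x n - S (x n)) (x n - y)) \<le> a * ((B + M) * D)"
        using a by (intro mult_left_mono) auto
      with \<open>inner (x n - x (Suc n)) (x n - y) \<le> step n * D\<close> show ?thesis by simp
    qed
    also have "\<dots> \<le> c * b * D + c * b * ((B + M) * D)"
    proof (rule add_mono)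
      show "step n * D \<le> c * b * D"
        using elim D by (intro mult_right_mono) (simp_all add: b_def)
      show "a * ((B + M) * D) \<le> c * b * ((B + M) * D)"
        using elim D B_pos M_nonneg by (intro mult_right_mono) (simp_all add: a_def b_def)
    qed
    also have "\<dots> = b * (c * q)" by (simp add: q_def algebra_simps)
    also have "c * q = e / 2" using q by (simp add: c_def)
    finally have le: "(1 - a) * b * inner (x n - T (x n)) (x n - y) \<le> b * (e / 2)" .
    show ?case
    proof (rule ccontr)
      assume "\<not> inner (x n - T (x n)) (x n - y) \<le> e"
      hence "(1 - a) * b * e < (1 - a) * b * inner (x n - T (x n)) (x n - y)"
        using a b by (intro mult_strict_left_mono) auto
      moreover have "b * (e / 2) < (1 - a) * b * e" using a b e by (simp add: field_simps)
      ultimately show False using le by simp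
    qed
  qed
qed

lemma limit_of_subsequence_in_vi_set:
  assumes \<sigma>: "strict_mono \<sigma>" and q: "(x \<circ> \<sigma>) \<longlonglongrightarrow> q"
  shows "q \<in> vi_set T (fixpts W)"
proof -
  have contW: "isCont W v" and contT: "isCont T v" for v
    using lipschitz_on_continuous_within[OF W_nonexpansive] lipschitz_on_continuous_within[OF T_nonexpansive]
    by simp_all
  have "(\<lambda>n. norm (x (\<sigma> n) - W (x (\<sigma> n)))) \<longlonglongrightarrow> norm (q - W q)"
    using q by (intro tendsto_intros isCont_tendsto_compose[OF contW]) (simp_all add: o_def)
  moreover have "(\<lambda>n. norm (x (\<sigma> n) - W (x (\<sigma> n)))) \<longlonglongrightarrow> 0"
    using LIMSEQ_subseq_LIMSEQ[OF W_residual_tendsto_zero \<sigma>] by (simp add: o_def)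
  ultimately have "norm (q - W q) = 0" by (rule LIMSEQ_unique)
  hence qF: "q \<in> fixpts W" by (simp add: fixpts_def)
  have "inner (q - T q) (q - y) \<le> 0" if y: "y \<in> fixpts W" for y
  proof (rule field_le_epsilon)
    fix e :: real assume "e > 0"
    have "(\<lambda>n. inner (x (\<sigma> n) - T (x (\<sigma> n))) (x (\<sigma> n) - y)) \<longlonglongrightarrow> inner (q - T q) (q - y)"
      using q by (intro tendsto_intros isCont_tendsto_compose[OF contT]) (simp_all add: o_def)
    moreover have "eventually (\<lambda>n. inner (x (\<sigma> n) - T (x (\<sigma> n))) (x (\<sigma> n) - y) \<le> e) sequentially"
      using eventually_subseq[OF \<sigma> T_inner_eventually_le[OF y \<open>e > 0\<close>]] .
    ultimately show "inner (q - T q) (q - y) \<le> 0 + e"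
      by (simp add: tendsto_upperbound)
  qed
  thus ?thesis
    using qF by (simp add: vi_set_def inner_diff_right)
qed

context
  fixes p :: 'a
  assumes p_vi: "p \<in> vi_set T (fixpts W)"
    and p_S_vi: "\<And>y. y \<in> vi_set T (fixpts W) \<Longrightarrow> 0 \<le> inner (p - S p) (y - p)"
begin

lemma S_inner_eventually_le:
  assumes e: "e > 0"
  shows "eventually (\<lambda>n. inner (S p - p) (x n - p) \<le> e) sequentially"
proof (rule ccontr)
  assume "\<not> ?thesis"
  from not_eventually_imp_subseq[OF this]
  obtain \<sigma> :: "nat \<Rightarrow> nat" where \<sigma>: "strict_mono \<sigma>" "\<And>n. e < inner (S p - p) (x (\<sigma> n) - p)"
    by (auto simp: not_le)
  have "bounded (range (x \<circ> \<sigma>))"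
    using x_bound unfolding bounded_iff by (intro exI[of _ B]) simp
  then obtain q \<tau> where \<tau>: "strict_mono \<tau>" "((x \<circ> \<sigma>) \<circ> \<tau>) \<longlonglongrightarrow> q"
    using bounded_imp_convergent_subsequence by blast
  have "q \<in> vi_set T (fixpts W)"
    using limit_of_subsequence_in_vi_set[OF strict_mono_o[OF \<sigma>(1) \<tau>(1)]] \<tau>(2) by (simp add: o_assoc)
  hence "0 \<le> inner (p - S p) (q - p)" by (rule p_S_vi)
  moreover have "(\<lambda>n. inner (S p - p) (x (\<sigma> (\<tau> n)) - p)) \<longlonglongrightarrow> inner (S p - p) (q - p)"
    using \<tau>(2) by (intro tendsto_intros) (simp add: o_def)
  hence "e \<le> inner (S p - p) (q - p)"
    by (rule tendsto_lowerbound) (use \<sigma>(2) in \<open>simp_all add: less_imp_le\<close>)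
  ultimately show False using e by (simp add: inner_diff_left)
qed

lemma T_inner_le_infdist:
  "inner (T p - p) (x (Suc n) - p) \<le> norm (T p - p) * (infdist (x n) (fixpts W) + step n)"
proof -
  have "fixpts W \<noteq> {}" using p_vi by (auto simp: vi_set_def)
  then obtain z where z: "z \<in> fixpts W" "infdist (x n) (fixpts W) = norm (x n - z)"
    using infdist_attains_inf[OF closed_fixpts[OF lipschitz_on_continuous_on[OF W_nonexpansive]]]
    by (metis dist_norm)
  have "inner (T p - p) (z - p) \<le> 0"
    using p_vi z(1) by (simp add: vi_set_def inner_diff_left)
  moreover have "inner (T p - p) (x n - z) \<le> norm (T p - p) * norm (x n - z)"
    and "inner (T p - p) (x (Suc n) - x n) \<le> norm (T p - p) * norm (x (Suc n) - x n)"
    by (rule norm_cauchy_schwarz)+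
  moreover have "inner (T p - p) (x (Suc n) - p)
      = inner (T p - p) (z - p) + inner (T p - p) (x n - z) + inner (T p - p) (x (Suc n) - x n)"
    by (simp add: inner_diff_right)
  ultimately show ?thesis
    using z(2) by (simp add: step_def distrib_left)
qed

lemma dist_sq_recursion:
  "(norm (x (Suc n) - p))\<^sup>2 \<le> (1 - \<alpha> n * (1 - r)) * (norm (x n - p))\<^sup>2
    + 2 * \<alpha> n * inner (S p - p) (x (Suc n) - p)
    + 2 * \<beta> n * (norm (T p - p) * (infdist (x n) (fixpts W) + step n))"
proof -
  define a b D where "a = \<alpha> n" and "b = \<beta> n" and "D = norm (x n - p)"
  have a: "0 < a" "a < 1" and b: "0 < b" "b < 1" using \<alpha>_range \<beta>_range by (auto simp: a_def b_def)
  have Wp: "W p = p" using p_vi by (simp add: vi_set_def fixpts_def)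
  define A where "A = a *\<^sub>R (S (x n) - S p) + (1 - a) *\<^sub>R (b *\<^sub>R (T (x n) - T p) + (1 - b) *\<^sub>R (W (x n) - W p))"
  define V where "V = a *\<^sub>R (S p - p) + ((1 - a) * b) *\<^sub>R (T p - p)"
  have split: "x (Suc n) - p = A + V"
    by (simp add: iter A_def V_def Wp a_def b_def algebra_simps)
  have c: "0 \<le> 1 - a * (1 - r)" "1 - a * (1 - r) \<le> 1"
    using a r_nonneg r_less_1 mult_mono[of a 1 "1 - r" 1] by auto
  have "b * norm (T (x n) - T p) \<le> b * D" "(1 - b) * norm (W (x n) - W p) \<le> (1 - b) * D"
    "a * norm (S (x n) - S p) \<le> a * (r * D)"
    using b a lipschitz_on_normD[OF T_nonexpansive, of "x n" p] lipschitz_on_normD[OF W_nonexpansive, of "x n" p]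
      lipschitz_on_normD[OF S_contraction, of "x n" p]
    by (simp_all add: D_def mult_left_mono)
  moreover have "norm (b *\<^sub>R (T (x n) - T p) + (1 - b) *\<^sub>R (W (x n) - W p))
      \<le> b * norm (T (x n) - T p) + (1 - b) * norm (W (x n) - W p)"
    using norm_triangle_ineq[of "b *\<^sub>R (T (x n) - T p)" "(1 - b) *\<^sub>R (W (x n) - W p)"] b
    by simp
  moreover have "b * D + (1 - b) * D = D" by (simp add: algebra_simps)
  ultimately have "norm (b *\<^sub>R (T (x n) - T p) + (1 - b) *\<^sub>R (W (x n) - W p)) \<le> D"
    by linarith
  hence "(1 - a) * norm (b *\<^sub>R (T (x n) - T p) + (1 - b) *\<^sub>R (W (x n) - W p)) \<le> (1 - a) * D"
    using a by (intro mult_left_mono) auto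
  moreover have "norm A \<le> a * norm (S (x n) - S p)
      + (1 - a) * norm (b *\<^sub>R (T (x n) - T p) + (1 - b) *\<^sub>R (W (x n) - W p))"
    using norm_triangle_ineq[of "a *\<^sub>R (S (x n) - S p)"
        "(1 - a) *\<^sub>R (b *\<^sub>R (T (x n) - T p) + (1 - b) *\<^sub>R (W (x n) - W p))"] a
    by (simp add: A_def)
  moreover have "a * (r * D) + (1 - a) * D = (1 - a * (1 - r)) * D" by (simp add: algebra_simps)
  ultimately have "norm A \<le> (1 - a * (1 - r)) * D"
    using \<open>a * norm (S (x n) - S p) \<le> a * (r * D)\<close> by linarith
  hence "(norm A)\<^sup>2 \<le> ((1 - a * (1 - r)) * D)\<^sup>2" by (simp add: power_mono)
  also have "\<dots> = (1 - a * (1 - r)) * ((1 - a * (1 - r)) * D\<^sup>2)" by (simp add: power2_eq_square)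
  also have "\<dots> \<le> (1 - a * (1 - r)) * (1 * D\<^sup>2)"
    using c by (intro mult_left_mono mult_right_mono) auto
  finally have A2: "(norm A)\<^sup>2 \<le> (1 - a * (1 - r)) * D\<^sup>2" by simp
  have "inner (A + V) V = inner (x (Suc n) - p) V" by (simp only: split)
  also have "\<dots> = a * inner (S p - p) (x (Suc n) - p) + ((1 - a) * b) * inner (T p - p) (x (Suc n) - p)"
    by (simp add: V_def inner_add_right inner_commute)
  also have "((1 - a) * b) * inner (T p - p) (x (Suc n) - p)
      \<le> b * (norm (T p - p) * (infdist (x n) (fixpts W) + step n))"
  proof -
    have "((1 - a) * b) * inner (T p - p) (x (Suc n) - p)
        \<le> ((1 - a) * b) * (norm (T p - p) * (infdist (x n) (fixpts W) + step n))"
      using T_inner_le_infdist[of n] a b by (intro mult_left_mono) auto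
    also have "\<dots> \<le> b * (norm (T p - p) * (infdist (x n) (fixpts W) + step n))"
      using a b by (intro mult_right_mono) (auto simp: infdist_nonneg step_def)
    finally show ?thesis .
  qed
  finally have "inner (A + V) V \<le> a * inner (S p - p) (x (Suc n) - p)
      + b * (norm (T p - p) * (infdist (x n) (fixpts W) + step n))" by simp
  with A2 power2_norm_add_le[of A V] show ?thesis
    unfolding split a_def b_def D_def by linarith
qed

lemma tendsto_vi_solution: "x \<longlonglongrightarrow> p"
proof -
  define d where "d n = (2 * inner (S p - p) (x (Suc n) - p)
      + 2 * (\<beta> n / \<alpha> n) * (norm (T p - p) * (infdist (x n) (fixpts W) + step n))) / (1 - r)" for n
  have "(\<lambda>n. (norm (x n - p))\<^sup>2) \<longlonglongrightarrow> 0"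
  proof (rule recursive_ineq_tendsto_zero[where g = "\<lambda>n. (1 - r) * \<alpha> n" and d = d])
    show "0 \<le> (1 - r) * \<alpha> n" "(1 - r) * \<alpha> n \<le> 1" for n
      using \<alpha>_range[of n] r_nonneg r_less_1 mult_mono[of "1 - r" 1 "\<alpha> n" 1] by auto
    show "filterlim (\<lambda>n. \<Sum>k<n. (1 - r) * \<alpha> k) at_top sequentially"
      using r_less_1 by (intro filterlim_sum_mult_at_top[OF \<alpha>_div]) simp
    have "(1 - r) * \<alpha> n * d n = 2 * \<alpha> n * inner (S p - p) (x (Suc n) - p)
        + 2 * \<beta> n * (norm (T p - p) * (infdist (x n) (fixpts W) + step n))" for n
      using \<alpha>_range[of n] r_less_1 by (simp add: d_def field_simps)
    thus "eventually (\<lambda>n. (norm (x (Suc n) - p))\<^sup>2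
        \<le> (1 - (1 - r) * \<alpha> n) * (norm (x n - p))\<^sup>2 + (1 - r) * \<alpha> n * d n) sequentially"
      using dist_sq_recursion by (intro always_eventually allI) (simp add: mult.commute add.assoc)
  next
    fix e :: real assume e: "e > 0"
    define e1 where "e1 = e * (1 - r) / 4"
    have e1: "e1 > 0" using e r_less_1 by (simp add: e1_def)
    obtain C where C: "C \<ge> 0" "eventually (\<lambda>n. infdist (x n) (fixpts W) \<le> C * \<beta> n) sequentially"
      using infdist_fixpts_eventually_le_\<beta> by blast
    define \<eta> where "\<eta> = e1 / ((norm (T p - p) + 1) * (C + 1))"
    have "(norm (T p - p) + 1) * (C + 1) > 0" using C(1) by (intro mult_pos_pos) (auto simp: add_nonneg_pos)
    hence \<eta>: "\<eta> > 0" using e1 by (simp add: \<eta>_def)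
    have "eventually (\<lambda>n. inner (S p - p) (x (Suc n) - p) \<le> e1) sequentially"
      using S_inner_eventually_le[OF e1] by (rule eventually_sequentially_Suc[THEN iffD2])
    moreover have "eventually (\<lambda>n. (\<beta> n)\<^sup>2 / \<alpha> n < \<eta>) sequentially"
      using \<eta> A2 by (intro eventually_less_of_limsup_less) simp
    ultimately show "eventually (\<lambda>n. d n \<le> e) sequentially"
      using C(2) step_eventually_le_\<beta>[OF zero_less_one]
    proof eventually_elim
      case (elim n)
      have a: "0 < \<alpha> n" and b: "0 < \<beta> n" using \<alpha>_range[of n] \<beta>_range[of n] by auto
      have "(\<beta> n / \<alpha> n) * (norm (T p - p) * (infdist (x n) (fixpts W) + step n))
          \<le> (\<beta> n / \<alpha> n) * (norm (T p - p) * ((C + 1) * \<beta> n))"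
        using elim a b by (intro mult_left_mono) (auto simp: algebra_simps)
      also have "\<dots> = (norm (T p - p) * (C + 1)) * ((\<beta> n)\<^sup>2 / \<alpha> n)" by (simp add: power2_eq_square)
      also have "\<dots> \<le> (norm (T p - p) * (C + 1)) * \<eta>"
        using elim(2) C(1) by (intro mult_left_mono) auto
      also have "\<dots> = e1 * (norm (T p - p) / (norm (T p - p) + 1))"
        using C(1) by (simp add: \<eta>_def divide_simps)
      also have "\<dots> \<le> e1 * 1"
        using e1 by (intro mult_left_mono) (auto simp: divide_le_eq_1 add_nonneg_pos)
      finally have "2 * inner (S p - p) (x (Suc n) - p)
          + 2 * (\<beta> n / \<alpha> n) * (norm (T p - p) * (infdist (x n) (fixpts W) + step n)) \<le> 4 * e1"
        using elim(1) by simp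
      hence "d n \<le> 4 * e1 / (1 - r)" unfolding d_def using r_less_1 by (intro divide_right_mono) auto
      thus ?case using r_less_1 by (simp add: e1_def)
    qed
  qed simp
  hence "(\<lambda>n. norm (x n - p)) \<longlonglongrightarrow> 0"
    using tendsto_real_sqrt by fastforce
  thus ?thesis by (simp add: tendsto_norm_zero_iff LIM_zero_iff)
qed

end

end

theorem mainTheorem7:
  fixes f1 f2 \<omega> :: "'a::euclidean_space \<Rightarrow> real"
    and gf1 gf2 g\<omega> :: "'a \<Rightarrow> 'a"
    and g1 g2 :: "'a \<Rightarrow> ereal"
    and Lf1 Lf2 L\<omega> \<mu> u t s :: real
    and \<alpha> \<beta> :: "nat \<Rightarrow> real"
    and x :: "nat \<Rightarrow> 'a"
    and S T W :: "'a \<Rightarrow> 'a"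
    and Ystar Xstar \<Omega> :: "'a set"
  assumes f1_convex: "convex_on UNIV f1" and f2_convex: "convex_on UNIV f2"
    and f1_grad: "\<And>y. GDERIV f1 y :> gf1 y" and f2_grad: "\<And>y. GDERIV f2 y :> gf2 y"
    and Lf1_pos: "Lf1 > 0" and Lf2_pos: "Lf2 > 0"
    and gf1_lip: "Lf1-lipschitz_on UNIV gf1" and gf2_lip: "Lf2-lipschitz_on UNIV gf2"
    and g1_proper: "proper_fun g1" and g1_lsc: "lsc_fun g1" and g1_convex: "convex_efun g1"
    and g2_proper: "proper_fun g2" and g2_lsc: "lsc_fun g2" and g2_convex: "convex_efun g2"
    and \<mu>_pos: "\<mu> > 0" and \<omega>_sc: "strongly_convex \<mu> \<omega>"
    and \<omega>_grad: "\<And>y. GDERIV \<omega> y :> g\<omega> y"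
    and L\<omega>_pos: "L\<omega> > 0" and g\<omega>_lip: "L\<omega>-lipschitz_on UNIV g\<omega>"
    and Ystar_def: "Ystar = {y. \<forall>z. ereal (f2 y) + g2 y \<le> ereal (f2 z) + g2 z}"
    and Xstar_def: "Xstar = {y \<in> Ystar. \<forall>z \<in> Ystar. ereal (f1 y) + g1 y \<le> ereal (f1 z) + g1 z}"
    and Ystar_ne: "Ystar \<noteq> {}" and Xstar_ne: "Xstar \<noteq> {}"
    and u_range: "0 < u" "u \<le> 2 / (L\<omega> + \<mu>)"
    and t_range: "0 < t" "t \<le> 1 / Lf1"
    and s_range: "0 < s" "s \<le> 1 / Lf2"
    and S_def: "\<And>y. S y = y - u *\<^sub>R g\<omega> y"
    and T_def: "\<And>y. T y = prox (\<lambda>z. ereal t * g1 z) (y - t *\<^sub>R gf1 y)"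
    and W_def: "\<And>y. W y = prox (\<lambda>z. ereal s * g2 z) (y - s *\<^sub>R gf2 y)"
    and \<alpha>_range: "\<And>k. 0 < \<alpha> k \<and> \<alpha> k < 1"
    and \<beta>_range: "\<And>k. 0 < \<beta> k \<and> \<beta> k < 1"
    and iter: "\<And>k. x (Suc k) = \<alpha> k *\<^sub>R S (x k) + ((1 - \<alpha> k) * \<beta> k) *\<^sub>R T (x k)
                              + ((1 - \<alpha> k) * (1 - \<beta> k)) *\<^sub>R W (x k)"
    and \<Omega>_def: "\<Omega> = {y \<in> fixpts W. \<forall>z \<in> fixpts W. inner (y - T y) (z - y) \<ge> 0}"
    and \<Omega>_ne: "\<Omega> \<noteq> {}"
    and ratio_lim: "filterlim (\<lambda>k. \<beta> k / \<alpha> k) at_top sequentially"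
    and \<alpha>_lim: "\<alpha> \<longlonglongrightarrow> 0"
    and \<alpha>_div: "filterlim (\<lambda>n. \<Sum>k<n. \<alpha> k) at_top sequentially"
    and K_cond: "\<exists>K>0. limsup (\<lambda>k. ereal (1 / \<alpha> (Suc k) * \<bar>1 / \<beta> (Suc k) - 1 / \<beta> k\<bar>)) \<le> ereal K"
    and diff_cond: "limsup (\<lambda>k. ereal ((\<bar>\<beta> (Suc k) - \<beta> k\<bar> + \<bar>\<alpha> (Suc k) - \<alpha> k\<bar>)
                                     / (\<alpha> (Suc k) * \<beta> (Suc k)))) = 0"
    and x_bounded: "bounded (range x)"
    and A1: "\<forall>\<rho>>0. \<exists>\<theta>>0. \<forall>y. norm y \<le> \<rho> \<longrightarrow> infdist y (fixpts W) \<le> \<theta> * norm (y - W y)"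
    and A2: "limsup (\<lambda>k. ereal ((\<beta> k)\<^sup>2 / \<alpha> k)) = 0"
  shows "\<exists>xs. xs \<in> \<Omega> \<and> (\<forall>y\<in>\<Omega>. inner (xs - S xs) (y - xs) \<ge> 0)
            \<and> (\<forall>z. z \<in> \<Omega> \<and> (\<forall>y\<in>\<Omega>. inner (z - S z) (y - z) \<ge> 0) \<longrightarrow> z = xs)
            \<and> (\<forall>y\<in>\<Omega>. \<omega> xs \<le> \<omega> y)
            \<and> x \<longlonglongrightarrow> xs"
proof -
  have T_eq: "T = (\<lambda>y. prox (\<lambda>z. ereal t * g1 z) (y - t *\<^sub>R gf1 y))"
    and W_eq: "W = (\<lambda>y. prox (\<lambda>z. ereal s * g2 z) (y - s *\<^sub>R gf2 y))"
    and S_eq: "S = (\<lambda>y. y - u *\<^sub>R g\<omega> y)"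
    using T_def W_def S_def by auto
  have T_ne: "1-lipschitz_on UNIV T" and W_ne: "1-lipschitz_on UNIV W"
    unfolding T_eq W_eq
    by (rule forward_backward_nonexpansive; fact)+
  have \<mu>L: "\<mu> \<le> L\<omega>" by (rule strongly_convex_modulus_le_lipschitz[OF \<omega>_sc \<omega>_grad g\<omega>_lip])
  obtain r where S_contr: "r-lipschitz_on UNIV S" and r: "r < 1"
    using gradient_step_contraction[OF \<omega>_sc \<omega>_grad g\<omega>_lip \<mu>_pos \<mu>L u_range] unfolding S_eq by blast
  have \<Omega>_eq: "\<Omega> = vi_set T (fixpts W)" by (simp add: \<Omega>_def vi_set_def)
  have "closed \<Omega>" "convex \<Omega>"
    unfolding \<Omega>_eq using T_ne W_ne
    by (simp_all add: closed_vi_set closed_fixpts convex_vi_set convex_fixpts lipschitz_on_continuous_on)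
  obtain xs where xs: "xs \<in> \<Omega>" "\<And>y. y \<in> \<Omega> \<Longrightarrow> \<omega> xs \<le> \<omega> y"
    using strongly_convex_attains_min_on_closed[OF \<omega>_sc \<mu>_pos \<omega>_grad \<open>closed \<Omega>\<close> \<Omega>_ne] by blast
  have vi: "0 \<le> inner (xs - S xs) (y - xs)" if "y \<in> \<Omega>" for y
    using convex_min_gderiv_inner_ge[OF \<open>convex \<Omega>\<close> xs \<omega>_grad that] u_range by (simp add: S_def)
  obtain B where B: "B > 0" "\<And>n. norm (x n) \<le> B"
    using x_bounded unfolding bounded_pos by auto
  interpret trilevel_iteration S T W \<alpha> \<beta> x r B
    by unfold_locales (use assms S_contr r T_ne W_ne B in auto)
  have "x \<longlonglongrightarrow> xs" using tendsto_vi_solution xs(1) vi unfolding \<Omega>_eq by blast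
  thus ?thesis
    using xs vi contraction_vi_unique[OF S_contr r] by blast
qed

end
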